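(* Let $R>0$, let $V$ be as below, and let $\overline{\phi}:B^2(R)\to\mathbb{R}$ be a smooth bounded function, regarded as a $z$-independent function on $X_L$. Define $\mathscr{L}\psi:=\Delta\psi-V''(\overline{\phi})\psi$. Then there exist $L_0>0$ and $c>0$, independent of $L$, such that for all $0<L<L_0$ the operator $\mathscr{L}$ is injective on $L^2_{2,\text{boundary}-0,\text{mean}-0}(X_L)$ and for all $\psi\in L^2_{2,\text{boundary}-0,\text{mean}-0}(X_L)$, \[ \|\psi\|_{L^2_2}\le c\,\|\mathscr{L}\psi\|_{L^2}. \]
   Context: $S^1_L=[0,L]/\!\sim$ is the circle of length $L$ with coordinate $z$; $X_L=B^2(R)\times S^1_L$ with the flat product metric and flat Laplacian $\Delta$. $V:\mathbb{R}\to\mathbb{R}$ is smooth with $tV'(t)\ge -c_V^2$ and $V''(t)\ge -c_V^2$ for all $t$, for some constant $c_V>0$. $L^p_k$ denotes the Sobolev space with norm $\sum_{i\le k}\|\nabla^i f\|_{L^p}$; "boundary-0" means the closure of compactly supported smooth functions (zero boundary values); "mean-0" means $\int_{\{x\}\times S^1_L}f\,dz=0$ for every $x\in B^2(R)$. *)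

theory Defs
  imports "HOL-Analysis.Analysis"
begin

text \<open>A function on X_L = B^2(R) x S^1_L is represented by a function on R^2 x R; only its
  values on the fundamental domain B^2(R) x [0,L) matter.\<close>

type_synonym pt = "(real \<times> real) \<times> real"

definition dd :: "'a::euclidean_space \<Rightarrow> ('a \<Rightarrow> real) \<Rightarrow> 'a \<Rightarrow> real" where
  "dd v f p = frechet_derivative f (at p) v"

fun iter_dd :: "'a::euclidean_space list \<Rightarrow> ('a \<Rightarrow> real) \<Rightarrow> 'a \<Rightarrow> real" where
  "iter_dd [] f = f"
| "iter_dd (v # vs) f = dd v (iter_dd vs f)"

definition smooth_on :: "'a::euclidean_space set \<Rightarrow> ('a \<Rightarrow> real) \<Rightarrow> bool" where
  "smooth_on S f \<longleftrightarrow> (\<forall>vs. set vs \<subseteq> Basis \<longrightarrow> (\<forall>p\<in>S. iter_dd vs f differentiable (at p)))"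

definition dom_X :: "real \<Rightarrow> real \<Rightarrow> pt set" where
  "dom_X R L = ball 0 R \<times> {0..<L}"

definition test_fun :: "real \<Rightarrow> real \<Rightarrow> (pt \<Rightarrow> real) \<Rightarrow> bool" where
  "test_fun R L \<eta> \<longleftrightarrow> smooth_on UNIV \<eta>
     \<and> (\<forall>x z. \<eta> (x, z + L) = \<eta> (x, z))
     \<and> (\<exists>r<R. \<forall>x z. norm x > r \<longrightarrow> \<eta> (x, z) = 0)"

definition L2norm :: "pt set \<Rightarrow> (pt \<Rightarrow> real) \<Rightarrow> real" where
  "L2norm \<Omega> f = sqrt (LINT p:\<Omega>|lborel. (f p)\<^sup>2)"

definition sqint :: "pt set \<Rightarrow> (pt \<Rightarrow> real) \<Rightarrow> bool" where
  "sqint \<Omega> f \<longleftrightarrow> set_borel_measurable lborel \<Omega> f \<and> set_integrable lborel \<Omega> (\<lambda>p. (f p)\<^sup>2)"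

text \<open>L^2_2 norm  ||f|| + ||\<nabla>f|| + ||\<nabla>^2 f||, where g1 b is the derivative of f in
  direction b and g2 b b' the second derivative in directions b, b'.\<close>
definition sob2_norm :: "pt set \<Rightarrow> (pt \<Rightarrow> real) \<Rightarrow> (pt \<Rightarrow> pt \<Rightarrow> real)
      \<Rightarrow> (pt \<Rightarrow> pt \<Rightarrow> pt \<Rightarrow> real) \<Rightarrow> real" where
  "sob2_norm \<Omega> f g1 g2 = L2norm \<Omega> f
     + sqrt (LINT p:\<Omega>|lborel. (\<Sum>b\<in>Basis. (g1 b p)\<^sup>2))
     + sqrt (LINT p:\<Omega>|lborel. (\<Sum>b\<in>Basis. \<Sum>b'\<in>Basis. (g2 b b' p)\<^sup>2))"

definition weak_derivs :: "real \<Rightarrow> real \<Rightarrow> (pt \<Rightarrow> real) \<Rightarrow> (pt \<Rightarrow> pt \<Rightarrow> real)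
      \<Rightarrow> (pt \<Rightarrow> pt \<Rightarrow> pt \<Rightarrow> real) \<Rightarrow> bool" where
  "weak_derivs R L \<psi> g1 g2 \<longleftrightarrow>
     sqint (dom_X R L) \<psi>
     \<and> (\<forall>b\<in>Basis. sqint (dom_X R L) (g1 b))
     \<and> (\<forall>b\<in>Basis. \<forall>b'\<in>Basis. sqint (dom_X R L) (g2 b b'))
     \<and> (\<forall>\<eta>. test_fun R L \<eta> \<longrightarrow>
          (\<forall>b\<in>Basis. (LINT p:dom_X R L|lborel. \<psi> p * dd b \<eta> p)
                       = - (LINT p:dom_X R L|lborel. g1 b p * \<eta> p))
        \<and> (\<forall>b\<in>Basis. \<forall>b'\<in>Basis. (LINT p:dom_X R L|lborel. \<psi> p * dd b (dd b' \<eta>) p)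
                       = (LINT p:dom_X R L|lborel. g2 b b' p * \<eta> p)))"

text \<open>\<psi> (with weak derivatives g1, g2) lies in L^2_{2,boundary-0,mean-0}(X_L):
  it is an L^2_2-limit of smooth compactly supported functions, and its z-means vanish.\<close>
definition in_H :: "real \<Rightarrow> real \<Rightarrow> (pt \<Rightarrow> real) \<Rightarrow> (pt \<Rightarrow> pt \<Rightarrow> real)
      \<Rightarrow> (pt \<Rightarrow> pt \<Rightarrow> pt \<Rightarrow> real) \<Rightarrow> bool" where
  "in_H R L \<psi> g1 g2 \<longleftrightarrow>
     weak_derivs R L \<psi> g1 g2
     \<and> (\<exists>\<phi> :: nat \<Rightarrow> pt \<Rightarrow> real. (\<forall>n. test_fun R L (\<phi> n))
          \<and> (\<lambda>n. sob2_norm (dom_X R L) (\<lambda>p. \<phi> n p - \<psi> p) (\<lambda>b p. dd b (\<phi> n) p - g1 b p)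
                   (\<lambda>b b' p. dd b (dd b' (\<phi> n)) p - g2 b b' p)) \<longlonglongrightarrow> 0)
     \<and> (AE x in lborel. x \<in> ball 0 R \<longrightarrow> (LINT z=0..L|lborel. \<psi> (x, z)) = 0)"

definition Lop :: "(real \<Rightarrow> real) \<Rightarrow> (real \<times> real \<Rightarrow> real) \<Rightarrow> (pt \<Rightarrow> real)
      \<Rightarrow> (pt \<Rightarrow> pt \<Rightarrow> pt \<Rightarrow> real) \<Rightarrow> pt \<Rightarrow> real" where
  "Lop V \<phi>bar \<psi> g2 p = (\<Sum>b\<in>Basis. g2 b b p) - deriv (deriv V) (\<phi>bar (fst p)) * \<psi> p"

end

(*
  For psi with zero mean on every circle fibre, the Poincare inequality on a circle of length L
  gives ||psi||^2 <= 8 L^2 ||d_z psi||^2.  Integration by parts, proved for smooth compactly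
  supported functions and passed to the L^2_2 limit, gives ||grad psi||^2 = -<psi, Lap psi> and
  ||Hess psi|| = ||Lap psi||.  Hence ||psi|| <= 8 L^2 ||Lap psi||.  Since |V''(phibar)| <= M on the
  ball, ||Lap psi|| <= ||L psi|| + M ||psi|| <= ||L psi|| + 8 L^2 M ||Lap psi||, so for 8 L^2 M <= 1/2
  the Laplacian, and with it every part of the L^2_2 norm, is controlled by ||L psi||.
*)

theory Submission
  imports Defs
begin

lemma Basis_pt: "(Basis :: pt set) = {((1,0),0), ((0,1),0), ((0,0),1)}"
  by (auto simp: Basis_prod_def zero_prod_def)

lemma has_real_derivative_dd_line:
  fixes f :: "'a::euclidean_space \<Rightarrow> real"
  assumes "f differentiable (at (p + t *\<^sub>R v))"
  shows "((\<lambda>s. f (p + s *\<^sub>R v)) has_real_derivative dd v f (p + t *\<^sub>R v)) (at t)"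
proof -
  let ?D = "frechet_derivative f (at (p + t *\<^sub>R v))"
  have D: "(f has_derivative ?D) (at (p + t *\<^sub>R v))"
    using assms frechet_derivative_works by blast
  have "((\<lambda>s. p + s *\<^sub>R v) has_derivative (\<lambda>s. s *\<^sub>R v)) (at t)"
    by (auto intro!: derivative_eq_intros)
  from has_derivative_compose[OF this D]
  have "((\<lambda>s. f (p + s *\<^sub>R v)) has_derivative (\<lambda>s. ?D (s *\<^sub>R v))) (at t)"
    by (simp add: o_def)
  moreover have "(\<lambda>s. ?D (s *\<^sub>R v)) = (\<lambda>s. dd v f (p + t *\<^sub>R v) * s)"
    using D has_derivative_linear unfolding dd_def by (fastforce simp: linear_cmul)
  ultimately show ?thesis by (simp add: has_field_derivative_def)
qed

lemma dd_product_line: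
  fixes f g :: "'a::euclidean_space \<Rightarrow> real"
  assumes "\<forall>q. f differentiable (at q)" "\<forall>q. g differentiable (at q)"
  shows "((\<lambda>t. f (p + t *\<^sub>R v) * g (p + t *\<^sub>R v)) has_real_derivative
     dd v f (p + t *\<^sub>R v) * g (p + t *\<^sub>R v) + f (p + t *\<^sub>R v) * dd v g (p + t *\<^sub>R v)) (at t)"
  using DERIV_mult[OF has_real_derivative_dd_line[of f p t v]
      has_real_derivative_dd_line[of g p t v]] assms
  by (simp add: algebra_simps)

lemma second_difference_mean_value:
  fixes f :: "'a::euclidean_space \<Rightarrow> real"
  assumes f: "\<forall>q. f differentiable (at q)" and fu: "\<forall>q. dd u f differentiable (at q)"
    and h: "h > 0"
  obtains \<xi> \<eta> where "0 < \<xi>" "\<xi> < h" "0 < \<eta>" "\<eta> < h"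
    "f (p + h *\<^sub>R u + h *\<^sub>R v) - f (p + h *\<^sub>R u) - f (p + h *\<^sub>R v) + f p
       = h * h * dd v (dd u f) (p + \<xi> *\<^sub>R u + \<eta> *\<^sub>R v)"
proof -
  define k where "k s = f (p + s *\<^sub>R u + h *\<^sub>R v) - f (p + s *\<^sub>R u)" for s
  define k' where "k' s = dd u f (p + s *\<^sub>R u + h *\<^sub>R v) - dd u f (p + s *\<^sub>R u)" for s
  have "(k has_real_derivative k' s) (at s)" for s
    using DERIV_diff[OF has_real_derivative_dd_line[of f "p + h *\<^sub>R v" s u]
        has_real_derivative_dd_line[of f p s u]] f
    unfolding k_def k'_def by (simp add: algebra_simps)
  then obtain \<xi> where \<xi>: "0 < \<xi>" "\<xi> < h" "k h - k 0 = h * k' \<xi>"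
    using MVT2[of 0 h k k'] h by auto
  define l where "l t = dd u f (p + \<xi> *\<^sub>R u + t *\<^sub>R v)" for t
  have "(l has_real_derivative dd v (dd u f) (p + \<xi> *\<^sub>R u + t *\<^sub>R v)) (at t)" for t
    unfolding l_def by (rule has_real_derivative_dd_line) (use fu in auto)
  then obtain \<eta> where \<eta>: "0 < \<eta>" "\<eta> < h"
    "l h - l 0 = h * dd v (dd u f) (p + \<xi> *\<^sub>R u + \<eta> *\<^sub>R v)"
    using MVT2[of 0 h l "\<lambda>t. dd v (dd u f) (p + \<xi> *\<^sub>R u + t *\<^sub>R v)"] h by auto
  have "k' \<xi> = l h - l 0" unfolding k'_def l_def by simp
  with \<xi> \<eta> show ?thesis unfolding k_def by (intro that[of \<xi> \<eta>]) (auto simp: algebra_simps)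
qed

lemma dist_add_scaleR_less:
  fixes u v :: "'a::real_normed_vector"
  assumes d: "d > 0" and a: "0 < a" "a < d / (2 * (norm u + norm v + 1))"
    and b: "0 < b" "b < d / (2 * (norm u + norm v + 1))"
  shows "dist (p + a *\<^sub>R u + b *\<^sub>R v) p < d"
proof -
  define h where "h = d / (2 * (norm u + norm v + 1))"
  have pos: "2 * (norm u + norm v + 1) > 0"
    by (smt (verit) norm_ge_zero)
  have "dist (p + a *\<^sub>R u + b *\<^sub>R v) p \<le> a * norm u + b * norm v"
    using a b norm_triangle_ineq[of "a *\<^sub>R u" "b *\<^sub>R v"] by (simp add: dist_norm)
  also have "\<dots> \<le> h * norm u + h * norm v"
    using a b unfolding h_def by (intro add_mono mult_right_mono) auto
  also have "\<dots> < h * (2 * (norm u + norm v + 1))"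
  proof -
    have h: "h > 0" unfolding h_def using d pos by simp
    then have "h * norm u \<ge> 0" "h * norm v \<ge> 0" by auto
    moreover have "h * (2 * (norm u + norm v + 1)) = 2 * (h * norm u) + 2 * (h * norm v) + 2 * h"
      by (simp add: algebra_simps)
    ultimately show ?thesis using h by linarith
  qed
  also have "\<dots> = d" unfolding h_def using pos by simp
  finally show ?thesis .
qed

text \<open>Schwarz's theorem: differentiability of the second derivatives makes them continuous, and
  both mixed derivatives are limits of the same second difference quotient.\<close>

lemma dd_commute:
  fixes f :: "'a::euclidean_space \<Rightarrow> real"
  assumes f: "\<forall>q. f differentiable (at q)" and fu: "\<forall>q. dd u f differentiable (at q)"
    and fv: "\<forall>q. dd v f differentiable (at q)"
    and fuv: "\<forall>q. dd v (dd u f) differentiable (at q)"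
    and fvu: "\<forall>q. dd u (dd v f) differentiable (at q)"
  shows "dd v (dd u f) p = dd u (dd v f) p"
proof (rule ccontr)
  let ?G1 = "dd v (dd u f)" and ?G2 = "dd u (dd v f)"
  assume ne: "?G1 p \<noteq> ?G2 p"
  define e where "e = \<bar>?G1 p - ?G2 p\<bar> / 3"
  have e: "e > 0" using ne by (simp add: e_def)
  have c1: "continuous (at p) ?G1" and c2: "continuous (at p) ?G2"
    using fuv fvu differentiable_imp_continuous_within by blast+
  obtain d1 where d1: "d1 > 0" "\<And>q. dist q p < d1 \<Longrightarrow> dist (?G1 q) (?G1 p) < e"
    using c1 e unfolding continuous_at_eps_delta by blast
  obtain d2 where d2: "d2 > 0" "\<And>q. dist q p < d2 \<Longrightarrow> dist (?G2 q) (?G2 p) < e"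
    using c2 e unfolding continuous_at_eps_delta by blast
  define d where "d = min d1 d2"
  define h where "h = d / (2 * (norm u + norm v + 1))"
  have "2 * (norm u + norm v + 1) > 0"
    by (smt (verit) norm_ge_zero)
  then have h: "h > 0" unfolding h_def d_def using d1 d2 by (simp add: divide_pos_pos)
  have close: "dist (p + a *\<^sub>R u + b *\<^sub>R v) p < d" if "0 < a" "a < h" "0 < b" "b < h" for a b
    using dist_add_scaleR_less[of d a u v b p] that d1 d2 unfolding h_def d_def by simp
  obtain a1 b1 where ab1: "0 < a1" "a1 < h" "0 < b1" "b1 < h"
    "f (p + h *\<^sub>R u + h *\<^sub>R v) - f (p + h *\<^sub>R u) - f (p + h *\<^sub>R v) + f p
      = h * h * ?G1 (p + a1 *\<^sub>R u + b1 *\<^sub>R v)"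
    using second_difference_mean_value[OF f fu h, of p v] by blast
  obtain a2 b2 where ab2: "0 < a2" "a2 < h" "0 < b2" "b2 < h"
    "f (p + h *\<^sub>R v + h *\<^sub>R u) - f (p + h *\<^sub>R v) - f (p + h *\<^sub>R u) + f p
      = h * h * ?G2 (p + a2 *\<^sub>R v + b2 *\<^sub>R u)"
    using second_difference_mean_value[OF f fv h, of p u] by blast
  have swap: "p + h *\<^sub>R v + h *\<^sub>R u = p + h *\<^sub>R u + h *\<^sub>R v" by (simp add: algebra_simps)
  from ab1(5) ab2(5)[unfolded swap]
  have "h * h * ?G1 (p + a1 *\<^sub>R u + b1 *\<^sub>R v) = h * h * ?G2 (p + a2 *\<^sub>R v + b2 *\<^sub>R u)"
    by linarith
  then have eq: "?G1 (p + a1 *\<^sub>R u + b1 *\<^sub>R v) = ?G2 (p + a2 *\<^sub>R v + b2 *\<^sub>R u)"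
    using h by simp
  have "dist (?G1 (p + a1 *\<^sub>R u + b1 *\<^sub>R v)) (?G1 p) < e"
    using d1(2) close[OF ab1(1-4)] by (simp add: d_def)
  moreover have "dist (?G2 (p + a2 *\<^sub>R v + b2 *\<^sub>R u)) (?G2 p) < e"
    using d2(2) close[OF ab2(3,4,1,2)] by (simp add: d_def algebra_simps)
  moreover have False if "\<bar>x - a\<bar> < \<bar>a - b\<bar> / 3" "\<bar>y - b\<bar> < \<bar>a - b\<bar> / 3" "x = y"
    for x y a b :: real
    using that by (auto simp: abs_if split: if_split_asm)
  ultimately show False
    using eq unfolding e_def dist_real_def by blast
qed

lemma iter_dd_append: "iter_dd (vs @ [b]) f = iter_dd vs (dd b f)"
  by (induction vs) auto

lemma differentiable_everywhere_imp_continuous_on: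
  "(\<forall>p. f differentiable (at p)) \<Longrightarrow> continuous_on S f"
  by (meson differentiable_at_imp_differentiable_on differentiable_imp_continuous_on)

lemma dd_eq_0_if_vanishes_on_open:
  fixes \<eta> :: "'a::euclidean_space \<Rightarrow> real"
  assumes "open S" "p \<in> S" "\<forall>q\<in>S. \<eta> q = 0"
  shows "dd b \<eta> p = 0"
proof -
  have "(\<eta> has_derivative (\<lambda>_. 0)) (at p)"
    by (rule has_derivative_transform_within_open[OF _ assms(1,2)]) (use assms(3) in auto)
  then show ?thesis unfolding dd_def using frechet_derivative_at by metis
qed

lemma dd_translation_invariant:
  fixes \<eta> :: "'a::euclidean_space \<Rightarrow> real"
  assumes per: "\<forall>q. \<eta> (q + c) = \<eta> q" and d: "\<eta> differentiable (at (p + c))"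
  shows "dd b \<eta> (p + c) = dd b \<eta> p"
proof -
  let ?F = "frechet_derivative \<eta> (at (p + c))"
  have D: "(\<eta> has_derivative ?F) (at (p + c))" using d frechet_derivative_works by blast
  have T: "((\<lambda>q. q + c) has_derivative (\<lambda>q. q)) (at p)"
    by (auto intro!: derivative_eq_intros)
  have "((\<lambda>q. \<eta> (q + c)) has_derivative ?F) (at p)"
    using has_derivative_compose[OF T D] by (simp add: o_def)
  then have "(\<eta> has_derivative ?F) (at p)" using per by simp
  then show ?thesis unfolding dd_def by (simp add: frechet_derivative_at[symmetric])
qed

lemma dd_vanishes_outside_cylinder:
  fixes \<eta> :: "pt \<Rightarrow> real"
  assumes "\<forall>x z. norm x > r \<longrightarrow> \<eta> (x, z) = 0" and "norm x > r"
  shows "dd b \<eta> (x, z) = 0"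
proof (rule dd_eq_0_if_vanishes_on_open)
  show "open {q::pt. r < norm (fst q)}"
    by (intro open_Collect_less continuous_intros)
qed (use assms in auto)

lemma test_fun_differentiable:
  "test_fun R L \<eta> \<Longrightarrow> set vs \<subseteq> Basis \<Longrightarrow> iter_dd vs \<eta> differentiable (at p)"
  unfolding test_fun_def smooth_on_def by blast

lemma test_fun_differentiable_0: "test_fun R L \<eta> \<Longrightarrow> \<forall>p. \<eta> differentiable (at p)"
  using test_fun_differentiable[of R L \<eta> "[]"] by simp

lemma test_fun_continuous_on: "test_fun R L \<eta> \<Longrightarrow> continuous_on S \<eta>"
  using test_fun_differentiable_0 differentiable_everywhere_imp_continuous_on by blast

lemma test_fun_support: "test_fun R L \<eta> \<Longrightarrow> \<exists>r<R. \<forall>x z. norm x > r \<longrightarrow> \<eta> (x, z) = 0"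
  unfolding test_fun_def by blast

lemma test_fun_dd:
  assumes t: "test_fun R L \<eta>" and b: "b \<in> Basis"
  shows "test_fun R L (dd b \<eta>)"
  unfolding test_fun_def
proof (intro conjI)
  show "smooth_on UNIV (dd b \<eta>)"
    unfolding smooth_on_def
    using test_fun_differentiable[OF t, of "_ @ [b]"] b by (simp add: iter_dd_append)
  have per: "\<forall>q. \<eta> (q + (0, L)) = \<eta> q"
    using t unfolding test_fun_def by auto
  show "\<forall>x z. dd b \<eta> (x, z + L) = dd b \<eta> (x, z)"
  proof (intro allI)
    fix x z
    have "dd b \<eta> ((x, z) + (0, L)) = dd b \<eta> (x, z)"
      by (rule dd_translation_invariant[OF per]) (use test_fun_differentiable_0[OF t] in blast)
    then show "dd b \<eta> (x, z + L) = dd b \<eta> (x, z)" by simp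
  qed
  obtain r where r: "r < R" "\<forall>x z. norm x > r \<longrightarrow> \<eta> (x, z) = 0"
    using test_fun_support[OF t] by blast
  with dd_vanishes_outside_cylinder[of r \<eta>] show "\<exists>r<R. \<forall>x z. r < norm x \<longrightarrow> dd b \<eta> (x, z) = 0" by blast
qed

lemma test_fun_dd_commute:
  assumes t: "test_fun R L \<phi>" and u: "u \<in> Basis" and v: "v \<in> Basis"
  shows "dd v (dd u \<phi>) = dd u (dd v \<phi>)"
proof (rule ext, rule dd_commute)
  have d: "\<forall>q. iter_dd vs \<phi> differentiable at q" if "set vs \<subseteq> Basis" for vs
    using test_fun_differentiable[OF t that] by blast
  show "\<forall>q. \<phi> differentiable at q" using d[of "[]"] by simp
  show "\<forall>q. dd u \<phi> differentiable at q" using d[of "[u]"] u by simp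
  show "\<forall>q. dd v \<phi> differentiable at q" using d[of "[v]"] v by simp
  show "\<forall>q. dd v (dd u \<phi>) differentiable at q" using d[of "[v,u]"] u v by simp
  show "\<forall>q. dd u (dd v \<phi>) differentiable at q" using d[of "[u,v]"] u v by simp
qed

section \<open>Integration by parts on the fundamental domain\<close>

lemma integral_dd_product_line:
  fixes f g :: "'a::euclidean_space \<Rightarrow> real"
  assumes "\<forall>q. f differentiable (at q)" "\<forall>q. g differentiable (at q)" and "a \<le> b"
  shows "integral {a..b}
      (\<lambda>t. dd v f (p + t *\<^sub>R v) * g (p + t *\<^sub>R v) + f (p + t *\<^sub>R v) * dd v g (p + t *\<^sub>R v))
    = f (p + b *\<^sub>R v) * g (p + b *\<^sub>R v) - f (p + a *\<^sub>R v) * g (p + a *\<^sub>R v)"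
  using dd_product_line[OF assms(1,2)] assms(3)
  by (intro integral_unique fundamental_theorem_of_calculus)
    (auto simp: has_real_derivative_iff_has_vector_derivative[symmetric]
      intro: has_field_derivative_at_within)

lemma null_sets_snd_eq: "{p::pt. snd p = c} \<in> null_sets lborel"
proof -
  have "(UNIV::(real\<times>real) set) \<times> {c} \<in> null_sets (lborel \<Otimes>\<^sub>M lborel)"
    by (rule lborel.times_in_null_sets2) auto
  moreover have "{p::pt. snd p = c} = UNIV \<times> {c}" by auto
  ultimately show ?thesis by (simp add: lborel_prod)
qed

lemma dom_X_sets [measurable]: "dom_X R L \<in> sets lborel"
  unfolding dom_X_def by (simp add: borel_Times)

lemma continuous_on_imp_borel_measurable_lborel:
  "continuous_on UNIV (f :: 'a::euclidean_space \<Rightarrow> real) \<Longrightarrow> f \<in> borel_measurable lborel"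
  using borel_measurable_continuous_onI by (simp add: measurable_lborel1)

text \<open>On the support of \<open>F\<close>, the fundamental domain and the box differ only in the null set
  \<open>z = L\<close>.\<close>

lemma set_integral_dom_X_eq_integral_box:
  fixes F :: "pt \<Rightarrow> real"
  assumes cont: "continuous_on UNIV F" and r: "r < R"
    and van: "\<forall>x z. norm x > r \<longrightarrow> F (x, z) = 0"
  shows "set_integrable lborel (dom_X R L) F"
    and "(LINT p:dom_X R L|lborel. F p) = integral (cbox ((-R,-R),0) ((R,R),L)) F"
proof -
  let ?K = "cbox ((-R,-R),0) ((R,R),L)"
  have iK: "set_integrable lborel ?K F"
    unfolding set_integrable_def
    using borel_integrable_compact[OF compact_cbox continuous_on_subset[OF cont]] by simp
  have "indicator (dom_X R L) (x, z) * F (x, z) = indicator ?K (x, z) * F (x, z)"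
    if "z \<noteq> L" for x :: "real \<times> real" and z
  proof (cases "norm x < R")
    case True
    have "\<bar>fst x\<bar> \<le> norm x" "\<bar>snd x\<bar> \<le> norm x"
      using norm_fst_le[of "fst x" "snd x"] norm_snd_le[of "snd x" "fst x"] by auto
    with True that have "(x, z) \<in> dom_X R L \<longleftrightarrow> (x, z) \<in> ?K"
      unfolding dom_X_def by (cases x) (auto simp: cbox_Pair_iff)
    then show ?thesis by (simp add: indicator_def)
  next
    case False
    then have "r < norm x" using r by linarith
    then have "F (x, z) = 0" using van by blast
    then show ?thesis by simp
  qed
  then have AE: "AE p in lborel. indicator (dom_X R L) p *\<^sub>R F p = indicator ?K p *\<^sub>R F p"
    by (intro AE_I'[OF null_sets_snd_eq[of L]]) force
  have m: "(\<lambda>p. indicator A p *\<^sub>R F p) \<in> borel_measurable lborel" if "A \<in> sets lborel" for A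
    using continuous_on_imp_borel_measurable_lborel[OF cont] that by measurable
  show "set_integrable lborel (dom_X R L) F"
    using iK unfolding set_integrable_def
    by (rule integrable_cong_AE_imp[OF _ m]) (use AE dom_X_sets in auto)
  have "(LINT p:dom_X R L|lborel. F p) = (LINT p:?K|lborel. F p)"
    unfolding set_lebesgue_integral_def by (rule integral_cong_AE[OF m m AE]) (use dom_X_sets in auto)
  also have "\<dots> = integral ?K F" using set_borel_integral_eq_integral(2)[OF iK] .
  finally show "(LINT p:dom_X R L|lborel. F p) = integral ?K F" .
qed

lemma set_integrable_test_fun_mult:
  assumes "test_fun R L f" "test_fun R L g"
  shows "set_integrable lborel (dom_X R L) (\<lambda>p. f p * g p)"
proof -
  obtain r where r: "r < R" "\<forall>x z. norm x > r \<longrightarrow> f (x, z) = 0"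
    using test_fun_support[OF assms(1)] by blast
  show ?thesis
    by (rule set_integral_dom_X_eq_integral_box(1)[OF _ r(1)])
      (use r(2) test_fun_continuous_on[OF assms(1)] test_fun_continuous_on[OF assms(2)]
        in \<open>auto intro!: continuous_on_mult\<close>)
qed

lemma integral_dd_product_periodic_eq_0:
  assumes tf: "test_fun R L f" and tg: "test_fun R L g" and L: "0 \<le> L"
  shows "integral (cbox 0 L) (\<lambda>z. dd ((0,0),1) f (x, z) * g (x, z) + f (x, z) * dd ((0,0),1) g (x, z)) = 0"
proof -
  have "f (x, L) = f (x, 0)" "g (x, L) = g (x, 0)"
    using tf tg unfolding test_fun_def by (metis add_0)+
  then show ?thesis
    using integral_dd_product_line[OF test_fun_differentiable_0[OF tf] test_fun_differentiable_0[OF tg] L,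
        of "((0,0),1)" "(x, 0)"]
    by (simp add: zero_prod_def[symmetric])
qed

lemma integral_dd_product_square_eq_0:
  assumes tf: "test_fun R L f" and tg: "test_fun R L g" and b: "b = ((1,0),0) \<or> b = ((0,1),0)"
    and R: "R > 0"
  shows "integral (cbox (-R,-R) (R,R)) (\<lambda>x. dd b f (x, z) * g (x, z) + f (x, z) * dd b g (x, z)) = 0"
proof -
  define H where "H x1 x2 = dd b f ((x1, x2), z) * g ((x1, x2), z) + f ((x1, x2), z) * dd b g ((x1, x2), z)"
    for x1 x2
  obtain r where r: "r < R" "\<forall>x z. norm x > r \<longrightarrow> f (x, z) = 0"
    using test_fun_support[OF tf] by blast
  have "r < norm (R, t)" "r < norm (-R, t)" "r < norm (t, R)" "r < norm (t, -R)" for t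
    using norm_fst_le[of R t] norm_fst_le[of "-R" t] norm_snd_le[of R t] norm_snd_le[of "-R" t] r R
    by auto
  then have edge: "f ((R, t), z) = 0" "f ((-R, t), z) = 0" "f ((t, R), z) = 0" "f ((t, -R), z) = 0" for t
    using r(2) by blast+
  note line = integral_dd_product_line[OF test_fun_differentiable_0[OF tf] test_fun_differentiable_0[OF tg],
      of "-R" R b]
  have "continuous_on UNIV (\<lambda>(x1, x2). H x1 x2)"
    unfolding H_def using tf tg b
    by (auto intro!: continuous_on_compose2[OF test_fun_continuous_on] continuous_intros
        test_fun_dd simp: Basis_pt split_beta)
  then have cH: "continuous_on (cbox (-R,-R) (R,R)) (\<lambda>(x1, x2). H x1 x2)"
    by (rule continuous_on_subset) simp
  have fubini: "integral (cbox (-R,-R) (R,R)) (\<lambda>(x1, x2). H x1 x2)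
      = integral (cbox (-R) R) (\<lambda>x1. integral (cbox (-R) R) (\<lambda>x2. H x1 x2))"
    using integral_prod_continuous[OF cH] by simp
  have swap: "integral (cbox (-R) R) (\<lambda>x1. integral (cbox (-R) R) (\<lambda>x2. H x1 x2))
      = integral (cbox (-R) R) (\<lambda>x2. integral (cbox (-R) R) (\<lambda>x1. H x1 x2))"
    by (rule integral_swap_continuous) (use cH in simp)
  have "integral (cbox (-R) R) (\<lambda>x2. H x1 x2) = 0" if "b = ((0,1),0)" for x1
    using line[of "((x1, 0), z)"] R edge that by (simp add: H_def)
  moreover have "integral (cbox (-R) R) (\<lambda>x1. H x1 x2) = 0" if "b = ((1,0),0)" for x2
    using line[of "((0, x2), z)"] R edge that by (simp add: H_def)
  ultimately have "integral (cbox (-R,-R) (R,R)) (\<lambda>(x1, x2). H x1 x2) = 0"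
    using b fubini swap by auto
  then show ?thesis by (simp add: H_def case_prod_unfold)
qed

lemma integral_dd_product_test_fun_eq_0:
  assumes tf: "test_fun R L f" and tg: "test_fun R L g" and b: "b \<in> Basis"
    and L: "0 \<le> L" and R: "R > 0"
  shows "(LINT p:dom_X R L|lborel. dd b f p * g p + f p * dd b g p) = 0"
proof -
  define H where "H p = dd b f p * g p + f p * dd b g p" for p
  obtain r where r: "r < R" "\<forall>x z. norm x > r \<longrightarrow> f (x, z) = 0"
    using test_fun_support[OF tf] by blast
  have cont: "continuous_on UNIV H"
    unfolding H_def using test_fun_continuous_on[OF tf] test_fun_continuous_on[OF tg]
      test_fun_continuous_on[OF test_fun_dd[OF tf b]] test_fun_continuous_on[OF test_fun_dd[OF tg b]]
    by (auto intro!: continuous_on_add continuous_on_mult)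
  have van: "\<forall>x z. norm x > r \<longrightarrow> H (x, z) = 0"
    using r(2) dd_vanishes_outside_cylinder[OF r(2)] unfolding H_def by simp
  have "(LINT p:dom_X R L|lborel. H p) = integral (cbox ((-R,-R),0) ((R,R),L)) H"
    by (rule set_integral_dom_X_eq_integral_box(2)[OF cont r(1) van])
  also have "\<dots> = integral (cbox (-R,-R) (R,R)) (\<lambda>x. integral (cbox 0 L) (\<lambda>z. H (x, z)))"
    by (rule integral_prod_continuous) (rule continuous_on_subset[OF cont], simp)
  also have "\<dots> = 0"
  proof (cases "b = ((0,0),1)")
    case True
    then show ?thesis
      using integral_dd_product_periodic_eq_0[OF tf tg L] by (simp add: H_def)
  next
    case False
    then have "b = ((1,0),0) \<or> b = ((0,1),0)" using b Basis_pt by auto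
    moreover have "integral (cbox (-R,-R) (R,R)) (\<lambda>x. integral (cbox 0 L) (\<lambda>z. H (x, z)))
        = integral (cbox 0 L) (\<lambda>z. integral (cbox (-R,-R) (R,R)) (\<lambda>x. H (x, z)))"
      by (rule integral_swap_continuous) (use continuous_on_subset[OF cont] in simp)
    ultimately show ?thesis
      using integral_dd_product_square_eq_0[OF tf tg _ R] by (simp add: H_def)
  qed
  finally show ?thesis unfolding H_def .
qed

lemma integration_by_parts_test_fun:
  assumes tf: "test_fun R L f" and tg: "test_fun R L g" and b: "b \<in> Basis"
    and L: "0 \<le> L" and R: "R > 0"
  shows "(LINT p:dom_X R L|lborel. dd b f p * g p) = - (LINT p:dom_X R L|lborel. f p * dd b g p)"
  using integral_dd_product_test_fun_eq_0[OF assms]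
    set_integral_add(2)[OF set_integrable_test_fun_mult[OF test_fun_dd[OF tf b] tg]
      set_integrable_test_fun_mult[OF tf test_fun_dd[OF tg b]]]
  by simp

definition square_integrable :: "'a measure \<Rightarrow> ('a \<Rightarrow> real) \<Rightarrow> bool" where
  "square_integrable M f \<longleftrightarrow> f \<in> borel_measurable M \<and> integrable M (\<lambda>x. (f x)\<^sup>2)"

definition inner_L2 :: "'a measure \<Rightarrow> ('a \<Rightarrow> real) \<Rightarrow> ('a \<Rightarrow> real) \<Rightarrow> real" where
  "inner_L2 M f g = (\<integral>x. f x * g x \<partial>M)"

lemma square_integrable_measurable: "square_integrable M f \<Longrightarrow> f \<in> borel_measurable M"
  by (simp add: square_integrable_def)

lemma square_integrable_mult:
  assumes "square_integrable M f" "square_integrable M g"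
  shows "integrable M (\<lambda>x. f x * g x)"
proof (rule Bochner_Integration.integrable_bound)
  show "integrable M (\<lambda>x. (f x)\<^sup>2 + (g x)\<^sup>2)" "(\<lambda>x. f x * g x) \<in> borel_measurable M"
    using assms unfolding square_integrable_def by auto
  show "AE x in M. norm (f x * g x) \<le> norm ((f x)\<^sup>2 + (g x)\<^sup>2)"
  proof (rule AE_I2)
    fix x
    have "2 * \<bar>f x * g x\<bar> \<le> (f x)\<^sup>2 + (g x)\<^sup>2"
      using sum_squares_bound[of "\<bar>f x\<bar>" "\<bar>g x\<bar>"] by (simp add: abs_mult power2_abs)
    then show "norm (f x * g x) \<le> norm ((f x)\<^sup>2 + (g x)\<^sup>2)" by simp
  qed
qed

lemma square_integrable_add:
  assumes "square_integrable M f" "square_integrable M g"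
  shows "square_integrable M (\<lambda>x. f x + g x)"
proof -
  have "(\<lambda>x. (f x + g x)\<^sup>2) = (\<lambda>x. (f x)\<^sup>2 + (g x)\<^sup>2 + 2 * (f x * g x))"
    by (rule ext) (simp add: power2_sum mult.assoc)
  with assms square_integrable_mult[OF assms] show ?thesis
    unfolding square_integrable_def by auto
qed

lemma square_integrable_cmult: "square_integrable M f \<Longrightarrow> square_integrable M (\<lambda>x. c * f x)"
  unfolding square_integrable_def by (auto simp: power_mult_distrib intro!: integrable_mult_right)

lemma square_integrable_diff:
  "square_integrable M f \<Longrightarrow> square_integrable M g \<Longrightarrow> square_integrable M (\<lambda>x. f x - g x)"
  using square_integrable_add[of M f "\<lambda>x. (-1) * g x"] square_integrable_cmult[of M g "-1"] by simp

lemma square_integrable_sum: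
  "(\<And>i. i \<in> I \<Longrightarrow> square_integrable M (f i)) \<Longrightarrow> square_integrable M (\<lambda>x. \<Sum>i\<in>I. f i x)"
proof (induction I rule: infinite_finite_induct)
  case (insert i I)
  then show ?case using square_integrable_add[of M "f i" "\<lambda>x. \<Sum>i\<in>I. f i x"] by simp
qed (simp_all add: square_integrable_def)

lemma square_integrable_bounded_mult:
  assumes f: "square_integrable M f" and W: "W \<in> borel_measurable M" and b: "\<And>x. \<bar>W x\<bar> \<le> C"
  shows "square_integrable M (\<lambda>x. W x * f x)"
  unfolding square_integrable_def
proof
  show m: "(\<lambda>x. W x * f x) \<in> borel_measurable M"
    using f W unfolding square_integrable_def by auto
  show "integrable M (\<lambda>x. (W x * f x)\<^sup>2)"
  proof (rule Bochner_Integration.integrable_bound)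
    show "integrable M (\<lambda>x. C\<^sup>2 * (f x)\<^sup>2)" using f unfolding square_integrable_def by auto
    show "(\<lambda>x. (W x * f x)\<^sup>2) \<in> borel_measurable M" using m by simp
    have "(W x)\<^sup>2 * (f x)\<^sup>2 \<le> C\<^sup>2 * (f x)\<^sup>2" for x
      using b[of x] abs_le_square_iff[of "W x" C] by (intro mult_right_mono) auto
    then show "AE x in M. norm ((W x * f x)\<^sup>2) \<le> norm (C\<^sup>2 * (f x)\<^sup>2)"
      by (simp add: power_mult_distrib)
  qed
qed

lemma inner_L2_commute: "inner_L2 M f g = inner_L2 M g f"
  unfolding inner_L2_def by (simp add: mult.commute)

lemma inner_L2_diff_left:
  "square_integrable M f \<Longrightarrow> square_integrable M g \<Longrightarrow> square_integrable M h \<Longrightarrow>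
    inner_L2 M (\<lambda>x. f x - g x) h = inner_L2 M f h - inner_L2 M g h"
  unfolding inner_L2_def using square_integrable_mult[of M f h] square_integrable_mult[of M g h]
  by (simp add: left_diff_distrib)

lemma inner_L2_diff_right:
  "square_integrable M f \<Longrightarrow> square_integrable M g \<Longrightarrow> square_integrable M h \<Longrightarrow>
    inner_L2 M h (\<lambda>x. f x - g x) = inner_L2 M h f - inner_L2 M h g"
  using inner_L2_diff_left[of M f g h] by (simp add: inner_L2_commute)

lemma inner_L2_add_left:
  "square_integrable M f \<Longrightarrow> square_integrable M g \<Longrightarrow> square_integrable M h \<Longrightarrow>
    inner_L2 M (\<lambda>x. f x + g x) h = inner_L2 M f h + inner_L2 M g h"
  unfolding inner_L2_def using square_integrable_mult[of M f h] square_integrable_mult[of M g h]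
  by (simp add: distrib_right)

lemma inner_L2_add_right:
  "square_integrable M f \<Longrightarrow> square_integrable M g \<Longrightarrow> square_integrable M h \<Longrightarrow>
    inner_L2 M h (\<lambda>x. f x + g x) = inner_L2 M h f + inner_L2 M h g"
  using inner_L2_add_left[of M f g h] by (simp add: inner_L2_commute)

lemma inner_L2_cmult_left: "inner_L2 M (\<lambda>x. c * f x) g = c * inner_L2 M f g"
  unfolding inner_L2_def by (simp add: mult.assoc)

lemma inner_L2_sum_right:
  "square_integrable M h \<Longrightarrow> (\<And>i. i \<in> I \<Longrightarrow> square_integrable M (f i)) \<Longrightarrow>
    inner_L2 M h (\<lambda>x. \<Sum>i\<in>I. f i x) = (\<Sum>i\<in>I. inner_L2 M h (f i))"
  unfolding inner_L2_def by (simp add: sum_distrib_left integral_sum square_integrable_mult)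

lemma inner_L2_sum_left:
  "square_integrable M h \<Longrightarrow> (\<And>i. i \<in> I \<Longrightarrow> square_integrable M (f i)) \<Longrightarrow>
    inner_L2 M (\<lambda>x. \<Sum>i\<in>I. f i x) h = (\<Sum>i\<in>I. inner_L2 M (f i) h)"
  using inner_L2_sum_right[of M h I f] by (simp add: inner_L2_commute)

lemma inner_L2_self_nonneg: "inner_L2 M f f \<ge> 0"
  unfolding inner_L2_def by simp

lemma discriminant_le_if_quadratic_nonneg:
  fixes a b c :: real
  assumes "\<And>t. 0 \<le> a - 2 * t * b + t\<^sup>2 * c" and c0: "c \<ge> 0"
  shows "b\<^sup>2 \<le> a * c"
proof (cases "c = 0")
  case True
  show ?thesis
  proof (cases "b = 0")
    case False
    have "0 \<le> a - 2 * ((a + 1) / (2 * b)) * b" using assms(1)[of "(a + 1) / (2 * b)"] True by simp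
    also have "\<dots> = -1" using False by (simp add: field_simps)
    finally show ?thesis by simp
  qed (use True assms(1)[of 0] in simp)
next
  case False
  have "0 \<le> a - 2 * (b / c) * b + (b / c)\<^sup>2 * c" by (rule assms(1))
  also have "\<dots> = a - b\<^sup>2 / c" using False by (simp add: field_simps power2_eq_square)
  finally have "b\<^sup>2 / c \<le> a" by simp
  then show ?thesis using False c0 by (simp add: field_simps mult.commute)
qed

lemma inner_L2_diff_scaled_self:
  assumes f: "square_integrable M f" and g: "square_integrable M g"
  shows "inner_L2 M (\<lambda>x. f x - t * g x) (\<lambda>x. f x - t * g x)
    = inner_L2 M f f - 2 * t * inner_L2 M f g + t\<^sup>2 * inner_L2 M g g"
proof -
  have "(\<lambda>x. (f x - t * g x) * (f x - t * g x))
      = (\<lambda>x. f x * f x - (2 * t) * (f x * g x) + t\<^sup>2 * (g x * g x))"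
    by (auto simp: power2_eq_square algebra_simps)
  then show ?thesis
    using square_integrable_mult[OF f f] square_integrable_mult[OF f g] square_integrable_mult[OF g g]
    unfolding inner_L2_def by simp
qed

lemma inner_L2_Cauchy_Schwarz:
  assumes f: "square_integrable M f" and g: "square_integrable M g"
  shows "(inner_L2 M f g)\<^sup>2 \<le> inner_L2 M f f * inner_L2 M g g"
proof (rule discriminant_le_if_quadratic_nonneg)
  fix t
  show "0 \<le> inner_L2 M f f - 2 * t * inner_L2 M f g + t\<^sup>2 * inner_L2 M g g"
    using inner_L2_diff_scaled_self[OF f g, of t] inner_L2_self_nonneg[of M "\<lambda>x. f x - t * g x"]
    by simp
qed (rule inner_L2_self_nonneg)

definition norm_L2 :: "'a measure \<Rightarrow> ('a \<Rightarrow> real) \<Rightarrow> real" where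
  "norm_L2 M f = sqrt (inner_L2 M f f)"

lemma norm_L2_nonneg: "norm_L2 M f \<ge> 0"
  unfolding norm_L2_def using inner_L2_self_nonneg by simp

lemma norm_L2_squared: "(norm_L2 M f)\<^sup>2 = inner_L2 M f f"
  unfolding norm_L2_def using inner_L2_self_nonneg by simp

lemma abs_inner_L2_le:
  assumes f: "square_integrable M f" and g: "square_integrable M g"
  shows "\<bar>inner_L2 M f g\<bar> \<le> norm_L2 M f * norm_L2 M g"
proof -
  have "\<bar>inner_L2 M f g\<bar> = sqrt ((inner_L2 M f g)\<^sup>2)" by simp
  also have "\<dots> \<le> sqrt (inner_L2 M f f * inner_L2 M g g)"
    using inner_L2_Cauchy_Schwarz[OF f g] by (rule real_sqrt_le_mono)
  also have "\<dots> = norm_L2 M f * norm_L2 M g" unfolding norm_L2_def by (simp add: real_sqrt_mult)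
  finally show ?thesis .
qed

lemma norm_L2_triangle:
  assumes f: "square_integrable M f" and g: "square_integrable M g"
  shows "norm_L2 M (\<lambda>x. f x + g x) \<le> norm_L2 M f + norm_L2 M g"
proof -
  have fg: "square_integrable M (\<lambda>x. f x + g x)" using square_integrable_add[OF f g] .
  have "inner_L2 M (\<lambda>x. f x + g x) (\<lambda>x. f x + g x)
      = inner_L2 M f f + 2 * inner_L2 M f g + inner_L2 M g g"
    using inner_L2_add_left[OF f g fg] inner_L2_add_right[OF f g f] inner_L2_add_right[OF f g g]
      inner_L2_commute[of M f g]
    by simp
  also have "\<dots> \<le> (norm_L2 M f)\<^sup>2 + 2 * (norm_L2 M f * norm_L2 M g) + (norm_L2 M g)\<^sup>2"
    using abs_inner_L2_le[OF f g] by (simp add: norm_L2_squared)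
  also have "\<dots> = (norm_L2 M f + norm_L2 M g)\<^sup>2" by (simp add: power2_sum)
  finally have "(norm_L2 M (\<lambda>x. f x + g x))\<^sup>2 \<le> (norm_L2 M f + norm_L2 M g)\<^sup>2"
    by (simp add: norm_L2_squared)
  then show ?thesis
    using norm_L2_nonneg[of M f] norm_L2_nonneg[of M g] by (simp add: power2_le_iff_abs_le)
qed

lemma norm_L2_le_diff_add:
  assumes f: "square_integrable M f" and g: "square_integrable M g"
  shows "norm_L2 M f \<le> norm_L2 M (\<lambda>x. f x - g x) + norm_L2 M g"
  using norm_L2_triangle[OF square_integrable_diff[OF f g] g] by simp

lemma norm_L2_bounded_mult_le:
  assumes f: "square_integrable M f" and W: "W \<in> borel_measurable M"
    and b: "\<And>x. \<bar>W x\<bar> \<le> C" and C: "0 \<le> C"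
  shows "norm_L2 M (\<lambda>x. W x * f x) \<le> C * norm_L2 M f"
proof -
  have "inner_L2 M (\<lambda>x. W x * f x) (\<lambda>x. W x * f x) \<le> inner_L2 M (\<lambda>x. C\<^sup>2 * f x) f"
    unfolding inner_L2_def
  proof (rule integral_mono)
    have Wf: "square_integrable M (\<lambda>x. W x * f x)" by (rule square_integrable_bounded_mult[OF f W b])
    show "integrable M (\<lambda>x. W x * f x * (W x * f x))" by (rule square_integrable_mult[OF Wf Wf])
    show "integrable M (\<lambda>x. C\<^sup>2 * f x * f x)"
      by (rule square_integrable_mult[OF square_integrable_cmult[OF f] f])
    fix x
    have "(W x)\<^sup>2 \<le> C\<^sup>2" using b[of x] by (metis abs_ge_zero power_mono power2_abs)
    then show "W x * f x * (W x * f x) \<le> C\<^sup>2 * f x * f x"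
      using mult_right_mono[of "(W x)\<^sup>2" "C\<^sup>2" "(f x)\<^sup>2"] by (simp add: power2_eq_square algebra_simps)
  qed
  also have "\<dots> = (C * norm_L2 M f)\<^sup>2"
    by (simp add: inner_L2_cmult_left norm_L2_squared power_mult_distrib)
  finally have "(norm_L2 M (\<lambda>x. W x * f x))\<^sup>2 \<le> (C * norm_L2 M f)\<^sup>2"
    by (simp add: norm_L2_squared)
  then show ?thesis
    using C norm_L2_nonneg[of M f] norm_L2_nonneg[of M "\<lambda>x. W x * f x"]
    by (simp add: power2_le_iff_abs_le)
qed

lemma inner_L2_tendsto:
  assumes f: "square_integrable M f" and g: "square_integrable M g"
    and F: "\<And>n. square_integrable M (F n)" and G: "\<And>n. square_integrable M (G n)"
    and cF: "(\<lambda>n. norm_L2 M (\<lambda>x. F n x - f x)) \<longlonglongrightarrow> 0"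
    and cG: "(\<lambda>n. norm_L2 M (\<lambda>x. G n x - g x)) \<longlonglongrightarrow> 0"
  shows "(\<lambda>n. inner_L2 M (F n) (G n)) \<longlonglongrightarrow> inner_L2 M f g"
proof -
  define b where "b n = norm_L2 M (\<lambda>x. F n x - f x) * (norm_L2 M (\<lambda>x. G n x - g x) + norm_L2 M g)
    + norm_L2 M f * norm_L2 M (\<lambda>x. G n x - g x)" for n
  have b0: "b \<longlonglongrightarrow> 0"
  proof -
    have "b \<longlonglongrightarrow> 0 * (0 + norm_L2 M g) + norm_L2 M f * 0"
      unfolding b_def by (intro tendsto_intros cF cG)
    then show ?thesis by simp
  qed
  have "(\<lambda>n. inner_L2 M (F n) (G n) - inner_L2 M f g) \<longlonglongrightarrow> 0"
  proof (rule Lim_null_comparison[OF _ b0], rule always_eventually, rule allI)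
    fix n
    have dF: "square_integrable M (\<lambda>x. F n x - f x)" using square_integrable_diff[OF F f] .
    have dG: "square_integrable M (\<lambda>x. G n x - g x)" using square_integrable_diff[OF G g] .
    have "inner_L2 M (F n) (G n) - inner_L2 M f g
        = inner_L2 M (\<lambda>x. F n x - f x) (G n) + inner_L2 M f (\<lambda>x. G n x - g x)"
      using inner_L2_diff_left[OF F f G] inner_L2_diff_right[OF G g f] by simp
    then have "\<bar>inner_L2 M (F n) (G n) - inner_L2 M f g\<bar>
        \<le> \<bar>inner_L2 M (\<lambda>x. F n x - f x) (G n)\<bar> + \<bar>inner_L2 M f (\<lambda>x. G n x - g x)\<bar>"
      by simp
    also have "\<dots> \<le> norm_L2 M (\<lambda>x. F n x - f x) * norm_L2 M (G n)
        + norm_L2 M f * norm_L2 M (\<lambda>x. G n x - g x)"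
      using abs_inner_L2_le[OF dF G[of n]] abs_inner_L2_le[OF f dG] by (rule add_mono)
    also have "\<dots> \<le> b n"
      unfolding b_def using norm_L2_le_diff_add[OF G g] norm_L2_nonneg[of M "\<lambda>x. F n x - f x"]
      by (simp add: mult_left_mono)
    finally show "norm (inner_L2 M (F n) (G n) - inner_L2 M f g) \<le> b n" by simp
  qed
  then show ?thesis by (rule LIM_zero_cancel)
qed

definition zero_ext :: "'a set \<Rightarrow> ('a \<Rightarrow> real) \<Rightarrow> 'a \<Rightarrow> real" where
  "zero_ext \<Omega> f p = indicator \<Omega> p * f p"

abbreviation L2sq :: "'a::euclidean_space set \<Rightarrow> ('a \<Rightarrow> real) \<Rightarrow> real" where
  "L2sq \<Omega> f \<equiv> inner_L2 lborel (zero_ext \<Omega> f) (zero_ext \<Omega> f)"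

lemma square_integrable_zero_ext_iff: "square_integrable lborel (zero_ext \<Omega> f) \<longleftrightarrow> sqint \<Omega> f"
proof -
  have "(\<lambda>p. (zero_ext \<Omega> f p)\<^sup>2) = (\<lambda>p. indicator \<Omega> p *\<^sub>R (f p)\<^sup>2)"
    by (rule ext) (simp add: zero_ext_def indicator_def)
  then show ?thesis
    unfolding sqint_def square_integrable_def set_borel_measurable_def set_integrable_def
    by (simp add: zero_ext_def[abs_def])
qed

lemma zero_ext_diff: "zero_ext \<Omega> (\<lambda>p. f p - g p) = (\<lambda>p. zero_ext \<Omega> f p - zero_ext \<Omega> g p)"
  by (rule ext) (simp add: zero_ext_def algebra_simps)

lemma sqint_diff: "sqint \<Omega> f \<Longrightarrow> sqint \<Omega> g \<Longrightarrow> sqint \<Omega> (\<lambda>p. f p - g p)"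
  using square_integrable_diff by (simp add: square_integrable_zero_ext_iff[symmetric] zero_ext_diff)

lemma set_integral_mult_eq_inner_L2:
  "(LINT p:\<Omega>|lborel. f p * g p) = inner_L2 lborel (zero_ext \<Omega> f) (zero_ext \<Omega> g)"
  unfolding set_lebesgue_integral_def inner_L2_def zero_ext_def
  by (rule Bochner_Integration.integral_cong) (auto simp: indicator_def)

lemma L2norm_eq_norm_L2: "L2norm \<Omega> f = norm_L2 lborel (zero_ext \<Omega> f)"
  unfolding L2norm_def norm_L2_def using set_integral_mult_eq_inner_L2[of \<Omega> f f]
  by (simp add: power2_eq_square)

lemma set_integral_sum_squares:
  assumes "\<And>i. i \<in> I \<Longrightarrow> sqint \<Omega> (f i)"
  shows "(LINT p:\<Omega>|lborel. (\<Sum>i\<in>I. (f i p)\<^sup>2)) = (\<Sum>i\<in>I. L2sq \<Omega> (f i))"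
proof -
  have "(LINT p:\<Omega>|lborel. (\<Sum>i\<in>I. (f i p)\<^sup>2)) = (\<Sum>i\<in>I. LINT p:\<Omega>|lborel. (f i p)\<^sup>2)"
    using assms unfolding sqint_def set_lebesgue_integral_def set_integrable_def
    by (simp add: sum_distrib_left integral_sum)
  then show ?thesis
    using set_integral_mult_eq_inner_L2[of \<Omega>] by (simp add: power2_eq_square)
qed

lemma sob2_norm_eq_norm_L2:
  assumes "sqint \<Omega> f0" "\<And>b. b \<in> Basis \<Longrightarrow> sqint \<Omega> (f1 b)"
    "\<And>b b'. b \<in> Basis \<Longrightarrow> b' \<in> Basis \<Longrightarrow> sqint \<Omega> (f2 b b')"
  shows "sob2_norm \<Omega> f0 f1 f2 = norm_L2 lborel (zero_ext \<Omega> f0)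
     + sqrt (\<Sum>b\<in>Basis. L2sq \<Omega> (f1 b))
     + sqrt (\<Sum>b\<in>Basis. \<Sum>b'\<in>Basis. L2sq \<Omega> (f2 b b'))"
proof -
  have "(LINT p:\<Omega>|lborel. (\<Sum>b\<in>Basis. \<Sum>b'\<in>Basis. (f2 b b' p)\<^sup>2))
      = (LINT p:\<Omega>|lborel. (\<Sum>(b, b')\<in>Basis \<times> Basis. (f2 b b' p)\<^sup>2))"
    by (simp add: sum.cartesian_product)
  also have "\<dots> = (\<Sum>(b, b')\<in>Basis \<times> Basis. L2sq \<Omega> (f2 b b'))"
    using set_integral_sum_squares[of "Basis \<times> Basis" \<Omega> "\<lambda>(b, b'). f2 b b'"] assms(3)
    by (simp add: case_prod_beta mem_Times_iff)
  finally show ?thesis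
    unfolding sob2_norm_def L2norm_eq_norm_L2
    using set_integral_sum_squares[of Basis \<Omega> f1] assms(2) by (simp add: sum.cartesian_product)
qed

lemma sqint_test_fun:
  assumes "test_fun R L f"
  shows "sqint (dom_X R L) f"
  unfolding sqint_def
proof
  show "set_borel_measurable lborel (dom_X R L) f"
    unfolding set_borel_measurable_def
    using continuous_on_imp_borel_measurable_lborel[OF test_fun_continuous_on[OF assms]] by measurable
  show "set_integrable lborel (dom_X R L) (\<lambda>p. (f p)\<^sup>2)"
    using set_integrable_test_fun_mult[OF assms assms] by (simp add: power2_eq_square)
qed

lemma square_integrable_zero_ext_test_fun:
  "test_fun R L f \<Longrightarrow> square_integrable lborel (zero_ext (dom_X R L) f)"
  by (simp add: square_integrable_zero_ext_iff sqint_test_fun)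

lemma L2sq_dd_test_fun:
  assumes t: "test_fun R L \<phi>" and b: "b \<in> Basis" and L: "0 \<le> L" and R: "R > 0"
  shows "L2sq (dom_X R L) (dd b \<phi>)
       = - inner_L2 lborel (zero_ext (dom_X R L) \<phi>) (zero_ext (dom_X R L) (dd b (dd b \<phi>)))"
  using integration_by_parts_test_fun[OF t test_fun_dd[OF t b] b L R]
  by (simp add: set_integral_mult_eq_inner_L2)

lemma L2sq_dd_dd_test_fun:
  assumes t: "test_fun R L \<phi>" and b: "b \<in> Basis" and b': "b' \<in> Basis" and L: "0 \<le> L" and R: "R > 0"
  shows "L2sq (dom_X R L) (dd b (dd b' \<phi>))
       = inner_L2 lborel (zero_ext (dom_X R L) (dd b (dd b \<phi>)))
           (zero_ext (dom_X R L) (dd b' (dd b' \<phi>)))"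
proof -
  have t1: "test_fun R L (dd b' \<phi>)" using test_fun_dd[OF t b'] .
  have "(LINT p:dom_X R L|lborel. dd b (dd b' \<phi>) p * dd b (dd b' \<phi>) p)
      = - (LINT p:dom_X R L|lborel. dd b' \<phi> p * dd b (dd b (dd b' \<phi>)) p)"
    using integration_by_parts_test_fun[OF t1 test_fun_dd[OF t1 b] b L R] .
  also have "dd b (dd b (dd b' \<phi>)) = dd b' (dd b (dd b \<phi>))"
    using test_fun_dd_commute[OF t b' b] test_fun_dd_commute[OF test_fun_dd[OF t b] b' b] by simp
  also have "- (LINT p:dom_X R L|lborel. dd b' \<phi> p * dd b' (dd b (dd b \<phi>)) p)
      = (LINT p:dom_X R L|lborel. dd b' (dd b' \<phi>) p * dd b (dd b \<phi>) p)"
    using integration_by_parts_test_fun[OF t1 test_fun_dd[OF test_fun_dd[OF t b] b] b' L R] by simp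
  finally show ?thesis
    by (simp add: set_integral_mult_eq_inner_L2 inner_L2_commute)
qed

section \<open>Poincare inequality along the fibres\<close>

lemma square_integral_abs_le:
  fixes w :: "real \<Rightarrow> real"
  assumes c: "continuous_on {0..L} w" and L: "L > 0"
  shows "(integral {0..L} (\<lambda>t. \<bar>w t\<bar>))\<^sup>2 \<le> L * integral {0..L} (\<lambda>t. (w t)\<^sup>2)"
proof -
  define J where "J = integral {0..L} (\<lambda>t. \<bar>w t\<bar>)"
  define J2 where "J2 = integral {0..L} (\<lambda>t. (w t)\<^sup>2)"
  have i1: "(\<lambda>t. (2 * (J / L)) * \<bar>w t\<bar>) integrable_on {0..L}"
    and i2: "(\<lambda>t. (w t)\<^sup>2) integrable_on {0..L}"
    by (intro integrable_continuous_interval continuous_intros c)+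
  have "0 \<le> integral {0..L} (\<lambda>t. (\<bar>w t\<bar> - J / L)\<^sup>2)"
    by (intro integral_nonneg integrable_continuous_interval continuous_intros c) simp
  also have "\<dots> = integral {0..L} (\<lambda>t. (w t)\<^sup>2 - (2 * (J / L)) * \<bar>w t\<bar> + (J / L)\<^sup>2)"
    by (rule integral_cong) (simp add: power2_eq_square algebra_simps)
  also have "\<dots> = J2 - (2 * (J / L)) * J + L * (J / L)\<^sup>2"
    using L integral_diff[OF i2 i1] integral_cmul[of "{0..L}" "2 * (J / L)" "\<lambda>t. \<bar>w t\<bar>"]
      integral_add[OF integrable_diff[OF i2 i1] integrable_const_ivl[of "(J / L)\<^sup>2" 0 L]]
    by (simp add: J_def J2_def)
  also have "\<dots> = J2 - J\<^sup>2 / L" using L by (simp add: field_simps power2_eq_square)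
  finally show ?thesis using L by (simp add: J_def J2_def field_simps)
qed

lemma abs_diff_le_integral_abs_deriv:
  fixes u u' :: "real \<Rightarrow> real"
  assumes d: "\<And>t. (u has_real_derivative u' t) (at t)" and c': "continuous_on UNIV u'" and z: "0 \<le> z"
  shows "\<bar>u z - u 0\<bar> \<le> integral {0..z} (\<lambda>t. \<bar>u' t\<bar>)"
proof -
  have "(u' has_integral (u z - u 0)) {0..z}"
    using d z by (intro fundamental_theorem_of_calculus)
      (auto simp: has_real_derivative_iff_has_vector_derivative[symmetric]
        intro: has_field_derivative_at_within)
  moreover have "u' integrable_on {0..z}" "(\<lambda>t. \<bar>u' t\<bar>) integrable_on {0..z}"
    by (intro integrable_continuous_interval continuous_intros continuous_on_subset[OF c'] subset_UNIV)+
  ultimately show ?thesis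
    using integral_norm_bound_integral[of u' "{0..z}" "\<lambda>t. \<bar>u' t\<bar>"] by (simp add: integral_unique)
qed

text \<open>\<open>u\<close> stays within \<open>2 \<integral>|u'|\<close> of its mean, and \<open>(\<integral>|u'|)\<^sup>2 \<le> L \<integral>u'\<^sup>2\<close>.\<close>

lemma poincare_interval:
  fixes u u' :: "real \<Rightarrow> real"
  assumes d: "\<And>t. (u has_real_derivative u' t) (at t)" and c': "continuous_on UNIV u'" and L: "L > 0"
  shows "integral {0..L} (\<lambda>t. (u t)\<^sup>2)
    \<le> 2 * (integral {0..L} u)\<^sup>2 / L + 8 * L\<^sup>2 * integral {0..L} (\<lambda>t. (u' t)\<^sup>2)"
proof -
  have cu: "continuous_on UNIV u"
    using d by (meson DERIV_isCont continuous_at_imp_continuous_on)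
  have iu: "u integrable_on {a..b}" and iu2: "(\<lambda>t. (u t)\<^sup>2) integrable_on {a..b}"
    and iau': "(\<lambda>t. \<bar>u' t\<bar>) integrable_on {a..b}" for a b
    by (intro integrable_continuous_interval continuous_intros continuous_on_subset[OF cu]
        continuous_on_subset[OF c'] subset_UNIV)+
  define J where "J = integral {0..L} (\<lambda>t. \<bar>u' t\<bar>)"
  define a where "a = integral {0..L} u"
  have osc: "\<bar>u z - u 0\<bar> \<le> J" if z: "z \<in> {0..L}" for z
  proof -
    have "integral {0..z} (\<lambda>t. \<bar>u' t\<bar>) \<le> J"
      unfolding J_def by (rule integral_subset_le) (use z iau' in auto)
    then show ?thesis using abs_diff_le_integral_abs_deriv[OF d c', of z] z by simp
  qed
  have "a - L * u 0 = integral {0..L} (\<lambda>t. u t - u 0)"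
    unfolding a_def using integral_diff[OF iu integrable_const_ivl[of "u 0" 0 L]] L by simp
  then have "\<bar>a - L * u 0\<bar> \<le> L * J"
    using integral_norm_bound_integral[of "\<lambda>t. u t - u 0" "{0..L}" "\<lambda>t. J"] osc L
      integrable_diff[OF iu integrable_const_ivl[of "u 0" 0 L]] integrable_const_ivl[of J 0 L] by simp
  then have mean: "\<bar>u 0 - a / L\<bar> \<le> J"
    using L by (simp add: field_simps abs_minus_commute pos_divide_le_eq mult.commute)
  have "(u z)\<^sup>2 \<le> 2 * (a / L)\<^sup>2 + 8 * J\<^sup>2" if z: "z \<in> {0..L}" for z
  proof -
    have "\<bar>u z - a / L\<bar> \<le> 2 * J" using osc[OF z] mean by linarith
    then have "(u z - a / L)\<^sup>2 \<le> (2 * J)\<^sup>2"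
      using power_mono[of "\<bar>u z - a / L\<bar>" "2 * J" 2] by simp
    moreover have "(u z)\<^sup>2 \<le> 2 * (a / L)\<^sup>2 + 2 * (u z - a / L)\<^sup>2"
      using zero_le_power2[of "u z - 2 * (a / L)"] by (simp add: power2_eq_square algebra_simps)
    ultimately show ?thesis by (simp add: power_mult_distrib)
  qed
  then have "integral {0..L} (\<lambda>t. (u t)\<^sup>2) \<le> integral {0..L} (\<lambda>t. 2 * (a / L)\<^sup>2 + 8 * J\<^sup>2)"
    by (intro integral_le[OF iu2 integrable_const_ivl]) auto
  also have "\<dots> = 2 * a\<^sup>2 / L + 8 * L * J\<^sup>2" using L by (simp add: field_simps power2_eq_square)
  also have "8 * L * J\<^sup>2 \<le> 8 * L * (L * integral {0..L} (\<lambda>t. (u' t)\<^sup>2))"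
    using square_integral_abs_le[OF continuous_on_subset[OF c'] L] L unfolding J_def by simp
  finally show ?thesis unfolding a_def by (simp add: power2_eq_square algebra_simps)
qed

lemma set_integral_Ioo_eq_integral:
  fixes F :: "real \<Rightarrow> real"
  assumes c: "continuous_on UNIV F" and L: "0 \<le> L"
  shows "set_integrable lborel {0<..<L} F" and "(LINT z:{0<..<L}|lborel. F z) = integral {0..L} F"
proof -
  have "set_integrable lborel {0..L} F"
    unfolding set_integrable_def
    using borel_integrable_compact[OF compact_Icc continuous_on_subset[OF c]] by simp
  then show si: "set_integrable lborel {0<..<L} F"
    by (rule set_integrable_subset) auto
  show "(LINT z:{0<..<L}|lborel. F z) = integral {0..L} F"
    using set_borel_integral_eq_integral(2)[OF si] integral_open_interval_real[of 0 L F] by simp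
qed

lemma nn_integral_Ioo_eq_integral:
  fixes F :: "real \<Rightarrow> real"
  assumes c: "continuous_on UNIV F" and L: "0 \<le> L" and nn: "\<And>z. F z \<ge> 0"
  shows "(\<integral>\<^sup>+ z. ennreal (indicator {0<..<L} z * F z) \<partial>lborel) = ennreal (integral {0..L} F)"
  using nn_integral_eq_integral[of lborel "\<lambda>z. indicator {0<..<L} z * F z"]
    set_integral_Ioo_eq_integral[OF c L] nn
  by (simp add: set_integrable_def set_lebesgue_integral_def)

lemma poincare_fiber_test_fun:
  assumes t: "test_fun R L \<phi>" and L: "L > 0"
  shows "(\<integral>\<^sup>+ z. ennreal (indicator {0<..<L} z * (\<phi> (x, z))\<^sup>2) \<partial>lborel)
    \<le> ennreal (2 * (LINT z:{0<..<L}|lborel. \<phi> (x, z))\<^sup>2 / L)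
      + ennreal (8 * L\<^sup>2) * (\<integral>\<^sup>+ z. ennreal (indicator {0<..<L} z * (dd ((0,0),1) \<phi> (x, z))\<^sup>2) \<partial>lborel)"
proof -
  let ?e = "((0,0),1) :: pt"
  define u where "u t = \<phi> (x, t)" for t
  define u' where "u' t = dd ?e \<phi> (x, t)" for t
  have x: "continuous_on UNIV (\<lambda>t::real. (x, t))" by (intro continuous_intros)
  have cu: "continuous_on UNIV u"
    unfolding u_def by (rule continuous_on_compose2[OF test_fun_continuous_on[OF t] x]) auto
  have cu': "continuous_on UNIV u'"
    unfolding u'_def
    by (rule continuous_on_compose2[OF test_fun_continuous_on[OF test_fun_dd[OF t]] x]) (auto simp: Basis_pt)
  have "(u has_real_derivative u' t) (at t)" for t
    using has_real_derivative_dd_line[of \<phi> "(x, 0)" t ?e] test_fun_differentiable_0[OF t]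
    unfolding u_def u'_def by (simp add: zero_prod_def[symmetric])
  note poincare = poincare_interval[OF this cu' L]
  have "integral {0..L} (\<lambda>t. (u' t)\<^sup>2) \<ge> 0"
    by (intro integral_nonneg integrable_continuous_interval continuous_intros
        continuous_on_subset[OF cu']) auto
  with poincare have "ennreal (integral {0..L} (\<lambda>t. (u t)\<^sup>2))
      \<le> ennreal (2 * (integral {0..L} u)\<^sup>2 / L) + ennreal (8 * L\<^sup>2) * ennreal (integral {0..L} (\<lambda>t. (u' t)\<^sup>2))"
    using L by (simp add: ennreal_plus[symmetric] ennreal_mult[symmetric] del: ennreal_plus)
  then show ?thesis
    using L nn_integral_Ioo_eq_integral[OF continuous_on_power[OF cu, of 2]]
      nn_integral_Ioo_eq_integral[OF continuous_on_power[OF cu', of 2]]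
      set_integral_Ioo_eq_integral(2)[OF cu]
    unfolding u_def u'_def by simp
qed

lemma nn_integral_abs_squared_le:
  fixes h :: "'a \<Rightarrow> real"
  assumes h: "h \<in> borel_measurable M" and S: "S \<in> sets M" and vanish: "\<And>z. z \<notin> S \<Longrightarrow> h z = 0"
  shows "(\<integral>\<^sup>+ z. ennreal \<bar>h z\<bar> \<partial>M)\<^sup>2 \<le> (\<integral>\<^sup>+ z. ennreal ((h z)\<^sup>2) \<partial>M) * emeasure M S"
proof -
  have "(\<integral>\<^sup>+ z. ennreal \<bar>h z\<bar> * indicator S z \<partial>M)\<^sup>2
      \<le> (\<integral>\<^sup>+ z. (ennreal \<bar>h z\<bar>)\<^sup>2 \<partial>M) * (\<integral>\<^sup>+ z. (indicator S z)\<^sup>2 \<partial>M)"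
    by (rule Cauchy_Schwarz_nn_integral) (use h S in auto)
  moreover have "(\<lambda>z. ennreal \<bar>h z\<bar> * indicator S z) = (\<lambda>z. ennreal \<bar>h z\<bar>)"
    using vanish by (auto simp: indicator_def)
  moreover have "(\<lambda>z. (indicator S z)\<^sup>2) = (indicator S :: 'a \<Rightarrow> ennreal)"
    by (auto simp: indicator_def)
  moreover have "(\<lambda>z. (ennreal \<bar>h z\<bar>)\<^sup>2) = (\<lambda>z. ennreal ((h z)\<^sup>2))"
    by (simp add: ennreal_power power2_abs)
  ultimately show ?thesis
    using S by simp
qed

text \<open>If \<open>g\<close> has mean zero on the interval then \<open>\<integral>f = \<integral>(f - g)\<close>, which Cauchy-Schwarz bounds by the
  \<open>L\<^sup>2\<close> distance of \<open>f\<close> and \<open>g\<close>.\<close>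

lemma mean_square_le_fiber_distance:
  fixes f g :: "real \<Rightarrow> real"
  assumes L: "L > 0" and c: "continuous_on UNIV f"
    and gm: "(\<lambda>z. indicator {0<..<L} z * g z) \<in> borel_measurable lborel"
    and g0: "(LINT z:{0<..<L}|lborel. g z) = 0"
  shows "ennreal ((LINT z:{0<..<L}|lborel. f z)\<^sup>2)
    \<le> ennreal L * (\<integral>\<^sup>+ z. ennreal (indicator {0<..<L} z * (f z - g z)\<^sup>2) \<partial>lborel)"
proof -
  let ?S = "{0<..<L} :: real set"
  define h where "h z = indicator ?S z * (f z - g z)" for z
  have "(\<lambda>z. indicator ?S z * f z) \<in> borel_measurable lborel"
    using continuous_on_imp_borel_measurable_lborel[OF c] by measurable
  with gm have hm: "h \<in> borel_measurable lborel"
    unfolding h_def by (simp add: right_diff_distrib)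
  define N where "N = (\<integral>\<^sup>+ z. ennreal (indicator ?S z * (f z - g z)\<^sup>2) \<partial>lborel)"
  have "(\<lambda>z. ennreal ((h z)\<^sup>2)) = (\<lambda>z. ennreal (indicator ?S z * (f z - g z)\<^sup>2))"
    by (auto simp: h_def indicator_def)
  with nn_integral_abs_squared_le[OF hm, of ?S] L
  have CS: "(\<integral>\<^sup>+ z. ennreal \<bar>h z\<bar> \<partial>lborel)\<^sup>2 \<le> N * ennreal L"
    by (simp add: h_def N_def)
  show ?thesis
  proof (cases "N = \<infinity>")
    case True
    then show ?thesis using L by (simp add: N_def[symmetric] ennreal_mult_top)
  next
    case False
    then have "(\<integral>\<^sup>+ z. ennreal \<bar>h z\<bar> \<partial>lborel)\<^sup>2 < \<infinity>"
      using CS by (simp add: less_top ennreal_mult_less_top le_less_trans)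
    then have ih: "integrable lborel h"
      by (intro integrableI_bounded[OF hm]) (simp add: power_less_top_ennreal)
    have fi: "set_integrable lborel ?S f" using set_integral_Ioo_eq_integral(1)[OF c] L by simp
    have "(\<lambda>z. indicator ?S z *\<^sub>R g z) = (\<lambda>z. indicator ?S z *\<^sub>R f z - h z)"
      by (rule ext) (simp add: h_def algebra_simps)
    then have gi: "set_integrable lborel ?S g"
      using fi ih unfolding set_integrable_def by simp
    have "(LINT z:?S|lborel. f z) = (LINT z:?S|lborel. f z - g z) + (LINT z:?S|lborel. g z)"
      using set_integral_diff(2)[OF fi gi] by simp
    also have "\<dots> = integral\<^sup>L lborel h"
      using g0 by (simp add: set_lebesgue_integral_def h_def[abs_def])
    finally have "ennreal ((LINT z:?S|lborel. f z)\<^sup>2) = (ennreal \<bar>integral\<^sup>L lborel h\<bar>)\<^sup>2"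
      by (simp add: ennreal_power power2_abs)
    also have "\<dots> \<le> (\<integral>\<^sup>+ z. ennreal \<bar>h z\<bar> \<partial>lborel)\<^sup>2"
      using integral_norm_bound_ennreal[OF ih] by (intro power_mono) auto
    finally show ?thesis using CS by (simp add: N_def mult.commute)
  qed
qed

lemma interval_integral_0_eq_set_integral_Ioo:
  "0 \<le> L \<Longrightarrow> (LBINT z=0..L. f z) = (LINT z:{0<..<L}|lborel. f z)"
  using einterval_eq_Icc[of 0 L]
  by (simp add: interval_lebesgue_integral_def zero_ereal_def)

lemma ennreal_inner_L2_self_eq_iterated_nn_integral:
  assumes "square_integrable lborel (g :: pt \<Rightarrow> real)"
  shows "ennreal (inner_L2 lborel g g) = (\<integral>\<^sup>+ x. (\<integral>\<^sup>+ z. ennreal ((g (x, z))\<^sup>2) \<partial>lborel) \<partial>lborel)"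
proof -
  have "(\<lambda>p. ennreal ((g p)\<^sup>2)) \<in> borel_measurable (lborel \<Otimes>\<^sub>M lborel)"
    using square_integrable_measurable[OF assms] by (simp add: lborel_prod)
  from lborel.nn_integral_fst[OF this] nn_integral_eq_integral[of lborel "\<lambda>p. (g p)\<^sup>2"] assms
  show ?thesis unfolding square_integrable_def inner_L2_def by (simp add: lborel_prod power2_eq_square)
qed

lemma nn_integral_fiber_zero_ext_dom_X:
  "(\<integral>\<^sup>+ z. ennreal ((zero_ext (dom_X R L) f (x, z))\<^sup>2) \<partial>lborel)
     = (if x \<in> ball 0 R then \<integral>\<^sup>+ z. ennreal (indicator {0<..<L} z * (f (x, z))\<^sup>2) \<partial>lborel else 0)"
proof (cases "x \<in> ball 0 R")
  case True
  have "AE z in lborel. ennreal ((zero_ext (dom_X R L) f (x, z))\<^sup>2)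
      = ennreal (indicator {0<..<L} z * (f (x, z))\<^sup>2)"
    using AE_lborel_singleton[of 0]
    by eventually_elim (use True in \<open>auto simp: zero_ext_def dom_X_def indicator_def\<close>)
  with True show ?thesis by (simp add: nn_integral_cong_AE)
qed (simp add: zero_ext_def dom_X_def indicator_def)

text \<open>On each fiber the mean of \<open>\<phi>\<close> is that of \<open>\<phi> - \<psi>\<close>, and the Poincare inequality controls \<open>\<phi>\<close>
  by its mean and its \<open>z\<close>-derivative.\<close>

lemma poincare_fiber_mean_zero:
  assumes t: "test_fun R L \<phi>" and L: "L > 0" and x: "x \<in> ball 0 R"
    and m: "(\<lambda>z. indicator {0<..<L} z * \<psi> (x, z)) \<in> borel_measurable lborel"
    and mean: "(LINT z:{0<..<L}|lborel. \<psi> (x, z)) = 0"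
  shows "(\<integral>\<^sup>+ z. ennreal ((zero_ext (dom_X R L) \<phi> (x, z))\<^sup>2) \<partial>lborel)
    \<le> 2 * (\<integral>\<^sup>+ z. ennreal ((zero_ext (dom_X R L) (\<lambda>p. \<phi> p - \<psi> p) (x, z))\<^sup>2) \<partial>lborel)
      + ennreal (8 * L\<^sup>2) * (\<integral>\<^sup>+ z. ennreal ((zero_ext (dom_X R L) (dd ((0,0),1) \<phi>) (x, z))\<^sup>2) \<partial>lborel)"
proof -
  let ?S = "{0<..<L} :: real set"
  have "continuous_on UNIV (\<lambda>z. \<phi> (x, z))"
    by (rule continuous_on_compose2[OF test_fun_continuous_on[OF t]]) (auto intro!: continuous_intros)
  from mean_square_le_fiber_distance[OF L this m mean]
  have CS: "ennreal ((LINT z:?S|lborel. \<phi> (x, z))\<^sup>2)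
      \<le> ennreal L * (\<integral>\<^sup>+ z. ennreal ((zero_ext (dom_X R L) (\<lambda>p. \<phi> p - \<psi> p) (x, z))\<^sup>2) \<partial>lborel)"
    using x by (simp add: nn_integral_fiber_zero_ext_dom_X)
  have "ennreal (2 * (LINT z:?S|lborel. \<phi> (x, z))\<^sup>2 / L)
      = ennreal (2 / L) * ennreal ((LINT z:?S|lborel. \<phi> (x, z))\<^sup>2)"
    using L by (simp add: ennreal_mult[symmetric])
  also have "\<dots> \<le> ennreal (2 / L) * ennreal L
      * (\<integral>\<^sup>+ z. ennreal ((zero_ext (dom_X R L) (\<lambda>p. \<phi> p - \<psi> p) (x, z))\<^sup>2) \<partial>lborel)"
    using mult_left_mono[OF CS] by (simp add: mult.assoc)
  also have "ennreal (2 / L) * ennreal L = 2"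
    using L by (simp add: ennreal_mult[symmetric])
  finally show ?thesis
    using poincare_fiber_test_fun[OF t L, of x] x
    by (simp add: nn_integral_fiber_zero_ext_dom_X) (meson add_mono order_trans order_refl)
qed

lemma borel_measurable_fiber:
  "(g :: pt \<Rightarrow> real) \<in> borel_measurable lborel \<Longrightarrow> (\<lambda>z. g (x, z)) \<in> borel_measurable lborel"
  using measurable_compose[OF borel_measurable_continuous_onI[of "\<lambda>z::real. (x, z)"]]
  by (simp add: continuous_intros)

lemma borel_measurable_nn_integral_fiber_square:
  assumes "(g :: pt \<Rightarrow> real) \<in> borel_measurable lborel"
  shows "(\<lambda>x. \<integral>\<^sup>+ z. ennreal ((g (x, z))\<^sup>2) \<partial>lborel) \<in> borel_measurable lborel"
proof -
  have "(\<lambda>p. ennreal ((g p)\<^sup>2)) \<in> borel_measurable (lborel \<Otimes>\<^sub>M lborel)"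
    using assms by (simp add: lborel_prod)
  then show ?thesis
    using lborel.borel_measurable_nn_integral[of "\<lambda>x z. ennreal ((g (x, z))\<^sup>2)"] by simp
qed

lemma poincare_test_fun_mean_zero:
  assumes t: "test_fun R L \<phi>" and s: "sqint (dom_X R L) \<psi>" and L: "L > 0"
    and mean: "AE x in lborel. x \<in> ball 0 R \<longrightarrow> (LBINT z=0..L. \<psi> (x, z)) = 0"
  shows "L2sq (dom_X R L) \<phi>
    \<le> 2 * L2sq (dom_X R L) (\<lambda>p. \<phi> p - \<psi> p)
      + 8 * L\<^sup>2 * L2sq (dom_X R L) (dd ((0,0),1) \<phi>)"
proof -
  let ?\<Omega> = "dom_X R L" and ?r = "zero_ext (dom_X R L)" and ?e = "((0,0),1) :: pt"
  define F where "F g x = (\<integral>\<^sup>+ z. ennreal ((?r g (x, z))\<^sup>2) \<partial>lborel)" for g x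
  have s\<phi>: "square_integrable lborel (?r \<phi>)"
    and s\<psi>: "square_integrable lborel (?r \<psi>)"
    and sd: "square_integrable lborel (?r (\<lambda>p. \<phi> p - \<psi> p))"
    and se: "square_integrable lborel (?r (dd ?e \<phi>))"
    using square_integrable_zero_ext_test_fun[OF t] square_integrable_zero_ext_test_fun[OF test_fun_dd[OF t]]
      s sqint_diff[OF sqint_test_fun[OF t] s]
    by (auto simp: square_integrable_zero_ext_iff Basis_pt)
  have Fm: "F g \<in> borel_measurable lborel" if "square_integrable lborel (?r g)" for g
    unfolding F_def by (rule borel_measurable_nn_integral_fiber_square[OF square_integrable_measurable[OF that]])
  have "AE x in lborel. F \<phi> x \<le> 2 * F (\<lambda>p. \<phi> p - \<psi> p) x + ennreal (8 * L\<^sup>2) * F (dd ?e \<phi>) x"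
    using mean
  proof eventually_elim
    case (elim x)
    show ?case
    proof (cases "x \<in> ball 0 R")
      case True
      have "(\<lambda>z. ?r \<psi> (x, z)) \<in> borel_measurable lborel"
        by (rule borel_measurable_fiber[OF square_integrable_measurable[OF s\<psi>]])
      moreover have "(\<lambda>z. indicator {0<..<L} z * \<psi> (x, z))
          = (\<lambda>z. indicator {0<..<L} z * ?r \<psi> (x, z))"
        using True by (auto simp: zero_ext_def dom_X_def indicator_def)
      ultimately have "(\<lambda>z. indicator {0<..<L} z * \<psi> (x, z)) \<in> borel_measurable lborel" by simp
      with elim True L show ?thesis
        unfolding F_def
        by (intro poincare_fiber_mean_zero[OF t L]) (simp_all add: interval_integral_0_eq_set_integral_Ioo)
    qed (simp add: F_def nn_integral_fiber_zero_ext_dom_X)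
  qed
  then have "(\<integral>\<^sup>+ x. F \<phi> x \<partial>lborel)
      \<le> (\<integral>\<^sup>+ x. 2 * F (\<lambda>p. \<phi> p - \<psi> p) x + ennreal (8 * L\<^sup>2) * F (dd ?e \<phi>) x \<partial>lborel)"
    by (rule nn_integral_mono_AE)
  also have "\<dots> = 2 * (\<integral>\<^sup>+ x. F (\<lambda>p. \<phi> p - \<psi> p) x \<partial>lborel)
      + ennreal (8 * L\<^sup>2) * (\<integral>\<^sup>+ x. F (dd ?e \<phi>) x \<partial>lborel)"
    using Fm[OF sd] Fm[OF se] by (simp add: nn_integral_add nn_integral_cmult)
  finally have "(\<integral>\<^sup>+ x. F \<phi> x \<partial>lborel)
      \<le> 2 * (\<integral>\<^sup>+ x. F (\<lambda>p. \<phi> p - \<psi> p) x \<partial>lborel)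
        + ennreal (8 * L\<^sup>2) * (\<integral>\<^sup>+ x. F (dd ?e \<phi>) x \<partial>lborel)" .
  also have "\<dots> = 2 * ennreal (L2sq ?\<Omega> (\<lambda>p. \<phi> p - \<psi> p))
      + ennreal (8 * L\<^sup>2) * ennreal (L2sq ?\<Omega> (dd ?e \<phi>))"
    unfolding F_def ennreal_inner_L2_self_eq_iterated_nn_integral[OF sd]
      ennreal_inner_L2_self_eq_iterated_nn_integral[OF se] ..
  also have "\<dots> = ennreal (2 * L2sq ?\<Omega> (\<lambda>p. \<phi> p - \<psi> p)
      + 8 * L\<^sup>2 * L2sq ?\<Omega> (dd ?e \<phi>))"
  proof -
    have "2 * ennreal a + ennreal k * ennreal b = ennreal (2 * a + k * b)"
      if "0 \<le> a" "0 \<le> b" "0 \<le> k" for a b k :: real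
      using that ennreal_mult[of 2 a] by (simp add: ennreal_plus ennreal_mult[symmetric])
    then show ?thesis by (simp add: inner_L2_self_nonneg)
  qed
  finally have "ennreal (L2sq ?\<Omega> \<phi>)
      \<le> ennreal (2 * L2sq ?\<Omega> (\<lambda>p. \<phi> p - \<psi> p)
        + 8 * L\<^sup>2 * L2sq ?\<Omega> (dd ?e \<phi>))"
    unfolding F_def ennreal_inner_L2_self_eq_iterated_nn_integral[OF s\<phi>] .
  then show ?thesis
    by (subst (asm) ennreal_le_iff) (simp_all add: inner_L2_self_nonneg)
qed

lemma dd_1_eq_deriv:
  fixes f :: "real \<Rightarrow> real"
  assumes "f differentiable (at p)"
  shows "dd 1 f p = deriv f p"
proof -
  have "DERIV f p :> deriv f p" using assms DERIV_deriv_iff_real_differentiable by blast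
  then have "(f has_derivative (*) (deriv f p)) (at p)" by (simp add: has_field_derivative_def)
  then have F: "(*) (deriv f p) = frechet_derivative f (at p)" by (rule frechet_derivative_at)
  show ?thesis unfolding dd_def using fun_cong[OF F, of 1] by simp
qed

lemma continuous_on_deriv_deriv:
  fixes V :: "real \<Rightarrow> real"
  assumes "smooth_on UNIV V"
  shows "continuous_on UNIV (deriv (deriv V))"
proof -
  have d: "iter_dd vs V differentiable (at p)" if "set vs \<subseteq> {1}" for vs p
    using assms that unfolding smooth_on_def by auto
  have e1: "deriv V = dd 1 V" by (rule ext) (use d[of "[]"] dd_1_eq_deriv in auto)
  have e2: "deriv (dd 1 V) = dd 1 (dd 1 V)" by (rule ext) (use d[of "[1]"] dd_1_eq_deriv in auto)
  have "continuous_on UNIV (dd 1 (dd 1 V))"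
    using d[of "[1,1]"] by (intro differentiable_everywhere_imp_continuous_on) auto
  then show ?thesis by (simp add: e1 e2)
qed

lemma smooth_on_imp_continuous_on:
  assumes "smooth_on S f"
  shows "continuous_on S f"
proof -
  have "\<forall>p\<in>S. f differentiable (at p)"
    using assms[unfolded smooth_on_def, rule_format, of "[]"] by simp
  then show ?thesis
    by (meson differentiable_at_imp_differentiable_on differentiable_imp_continuous_on)
qed

lemma bounded_continuous_comp:
  fixes W :: "real \<Rightarrow> real"
  assumes W: "continuous_on UNIV W" and b: "bounded (f ` S)"
  obtains M where "M \<ge> 0" "\<And>x. x \<in> S \<Longrightarrow> \<bar>W (f x)\<bar> \<le> M"
proof -
  have "compact (closure (f ` S))" using b by simp
  from compact_continuous_image[OF continuous_on_subset[OF W subset_UNIV] this]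
  have "compact (W ` closure (f ` S))" .
  from compact_imp_bounded[OF this] obtain B where B: "\<forall>y\<in>W ` closure (f ` S). norm y \<le> B"
    unfolding bounded_iff by blast
  have "\<bar>W (f x)\<bar> \<le> max B 0" if "x \<in> S" for x
  proof -
    have "f x \<in> closure (f ` S)" by (rule subsetD[OF closure_subset imageI[OF that]])
    then have "W (f x) \<in> W ` closure (f ` S)" by (rule imageI)
    then have "norm (W (f x)) \<le> B" using B by blast
    then show ?thesis by simp
  qed
  then show ?thesis using that[of "max B 0"] by simp
qed

lemma borel_measurable_potential:
  fixes W :: "real \<Rightarrow> real" and \<phi> :: "real \<times> real \<Rightarrow> real"
  assumes W: "continuous_on UNIV W" and \<phi>: "continuous_on (ball 0 R) \<phi>"
  shows "(\<lambda>q. indicator (dom_X R L) q * W (\<phi> (fst q))) \<in> borel_measurable lborel"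
proof -
  let ?U = "ball 0 R \<times> (UNIV :: real set)"
  have U: "?U \<in> sets borel" by (intro borel_Times) auto
  have "continuous_on ?U (\<lambda>q. \<phi> (fst q))"
    by (rule continuous_on_compose2[OF \<phi> continuous_on_fst[OF continuous_on_id]]) auto
  then have "continuous_on ?U (\<lambda>q. W (\<phi> (fst q)))"
    by (rule continuous_on_compose2[OF W]) simp
  from borel_measurable_continuous_on_indicator[OF U this]
  have m: "(\<lambda>q. indicator ?U q *\<^sub>R W (\<phi> (fst q))) \<in> borel_measurable lborel"
    by simp
  have "(\<lambda>q. indicator (dom_X R L) q * W (\<phi> (fst q)))
      = (\<lambda>q. indicator (dom_X R L) q * (indicator ?U q *\<^sub>R W (\<phi> (fst q))))"
    by (rule ext) (auto simp: indicator_def dom_X_def)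
  then show ?thesis
    using borel_measurable_times[OF borel_measurable_indicator[OF dom_X_sets] m] by simp
qed

section \<open>Passing to the limit from test functions\<close>

lemma in_H_sqint:
  assumes "in_H R L \<psi> g1 g2"
  shows "sqint (dom_X R L) \<psi>" "\<And>b. b \<in> Basis \<Longrightarrow> sqint (dom_X R L) (g1 b)"
    "\<And>b b'. b \<in> Basis \<Longrightarrow> b' \<in> Basis \<Longrightarrow> sqint (dom_X R L) (g2 b b')"
  using assms unfolding in_H_def weak_derivs_def by auto

lemma tendsto_0_if_le_tendsto_0:
  fixes x y :: "nat \<Rightarrow> real"
  assumes "y \<longlonglongrightarrow> 0" "\<And>n. 0 \<le> x n" "\<And>n. x n \<le> y n"
  shows "x \<longlonglongrightarrow> 0"
  by (rule Lim_null_comparison[OF _ assms(1)]) (use assms(2,3) in simp)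

lemma in_H_approximation:
  assumes H: "in_H R L \<psi> g1 g2"
  obtains \<phi> where "\<And>n. test_fun R L (\<phi> n)"
    "(\<lambda>n. norm_L2 lborel (\<lambda>p. zero_ext (dom_X R L) (\<phi> n) p - zero_ext (dom_X R L) \<psi> p)) \<longlonglongrightarrow> 0"
    "\<And>b::pt. b \<in> Basis \<Longrightarrow>
      (\<lambda>n. norm_L2 lborel (\<lambda>p. zero_ext (dom_X R L) (dd b (\<phi> n)) p - zero_ext (dom_X R L) (g1 b) p)) \<longlonglongrightarrow> 0"
    "\<And>b b'::pt. b \<in> Basis \<Longrightarrow> b' \<in> Basis \<Longrightarrow>
      (\<lambda>n. norm_L2 lborel (\<lambda>p. zero_ext (dom_X R L) (dd b (dd b' (\<phi> n))) p
                               - zero_ext (dom_X R L) (g2 b b') p)) \<longlonglongrightarrow> 0"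
proof -
  let ?\<Omega> = "dom_X R L"
  let ?r = "zero_ext ?\<Omega>"
  obtain \<phi> where t: "\<And>n. test_fun R L (\<phi> n)"
    and lim: "(\<lambda>n. sob2_norm ?\<Omega> (\<lambda>p. \<phi> n p - \<psi> p) (\<lambda>b p. dd b (\<phi> n) p - g1 b p)
                   (\<lambda>b b' p. dd b (dd b' (\<phi> n)) p - g2 b b' p)) \<longlonglongrightarrow> 0"
    using H unfolding in_H_def by blast
  note s = in_H_sqint[OF H] and st = sqint_test_fun[OF t] sqint_test_fun[OF test_fun_dd[OF t]]
    sqint_test_fun[OF test_fun_dd[OF test_fun_dd[OF t]]]
  define T0 where "T0 n = norm_L2 lborel (?r (\<lambda>p. \<phi> n p - \<psi> p))" for n
  define T1 where "T1 n = sqrt (\<Sum>b\<in>Basis. L2sq ?\<Omega> (\<lambda>p. dd b (\<phi> n) p - g1 b p))" for n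
  define T2 where "T2 n = sqrt (\<Sum>b\<in>Basis. \<Sum>b'\<in>Basis. L2sq ?\<Omega> (\<lambda>p. dd b (dd b' (\<phi> n)) p - g2 b b' p))"
    for n
  have T_nonneg: "0 \<le> T0 n" "0 \<le> T1 n" "0 \<le> T2 n" for n
    by (simp_all add: T0_def T1_def T2_def norm_L2_nonneg sum_nonneg inner_L2_self_nonneg)
  have "sob2_norm ?\<Omega> (\<lambda>p. \<phi> n p - \<psi> p) (\<lambda>b p. dd b (\<phi> n) p - g1 b p)
      (\<lambda>b b' p. dd b (dd b' (\<phi> n)) p - g2 b b' p) = T0 n + T1 n + T2 n" for n
    unfolding T0_def T1_def T2_def using s st by (intro sob2_norm_eq_norm_L2 sqint_diff) auto
  with lim have "T0 \<longlonglongrightarrow> 0" "T1 \<longlonglongrightarrow> 0" "T2 \<longlonglongrightarrow> 0"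
    by (auto intro: tendsto_0_if_le_tendsto_0 simp: T_nonneg add_nonneg_nonneg)
  show ?thesis
  proof (rule that[OF t])
    show "(\<lambda>n. norm_L2 lborel (\<lambda>p. ?r (\<phi> n) p - ?r \<psi> p)) \<longlonglongrightarrow> 0"
      using \<open>T0 \<longlonglongrightarrow> 0\<close> unfolding T0_def zero_ext_diff .
  next
    fix b :: pt assume b: "b \<in> Basis"
    show "(\<lambda>n. norm_L2 lborel (\<lambda>p. ?r (dd b (\<phi> n)) p - ?r (g1 b) p)) \<longlonglongrightarrow> 0"
      using \<open>T1 \<longlonglongrightarrow> 0\<close> unfolding T1_def norm_L2_def zero_ext_diff
      by (rule tendsto_0_if_le_tendsto_0)
        (auto intro!: member_le_sum[OF b] simp: inner_L2_self_nonneg)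
  next
    fix b b' :: pt assume b: "b \<in> Basis" and b': "b' \<in> Basis"
    show "(\<lambda>n. norm_L2 lborel (\<lambda>p. ?r (dd b (dd b' (\<phi> n))) p - ?r (g2 b b') p)) \<longlonglongrightarrow> 0"
      using \<open>T2 \<longlonglongrightarrow> 0\<close> unfolding T2_def norm_L2_def zero_ext_diff
      by (rule tendsto_0_if_le_tendsto_0)
        (auto intro!: order_trans[OF member_le_sum[OF b'] member_le_sum[OF b]]
          simp: inner_L2_self_nonneg sum_nonneg)
  qed
qed

lemma L2sq_grad_in_H:
  assumes R: "R > 0" and L: "L > 0" and H: "in_H R L \<psi> g1 g2"
  shows "(\<Sum>b\<in>Basis. L2sq (dom_X R L) (g1 b))
    = - (\<Sum>b\<in>Basis. inner_L2 lborel (zero_ext (dom_X R L) \<psi>) (zero_ext (dom_X R L) (g2 b b)))"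
proof -
  let ?\<Omega> = "dom_X R L" and ?r = "zero_ext (dom_X R L)"
  obtain \<phi> where t: "\<And>n. test_fun R L (\<phi> n)"
    and c0: "(\<lambda>n. norm_L2 lborel (\<lambda>p. ?r (\<phi> n) p - ?r \<psi> p)) \<longlonglongrightarrow> 0"
    and c1: "\<And>b. b \<in> Basis \<Longrightarrow> (\<lambda>n. norm_L2 lborel (\<lambda>p. ?r (dd b (\<phi> n)) p - ?r (g1 b) p)) \<longlonglongrightarrow> 0"
    and c2: "\<And>b b'. b \<in> Basis \<Longrightarrow> b' \<in> Basis \<Longrightarrow>
      (\<lambda>n. norm_L2 lborel (\<lambda>p. ?r (dd b (dd b' (\<phi> n))) p - ?r (g2 b b') p)) \<longlonglongrightarrow> 0"
    by (rule in_H_approximation[OF H]) fast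
  note s = in_H_sqint[OF H, unfolded square_integrable_zero_ext_iff[symmetric]]
  note st = square_integrable_zero_ext_test_fun[OF t]
    square_integrable_zero_ext_test_fun[OF test_fun_dd[OF t]]
    square_integrable_zero_ext_test_fun[OF test_fun_dd[OF test_fun_dd[OF t]]]
  have "(\<lambda>n. \<Sum>b\<in>Basis. L2sq ?\<Omega> (dd b (\<phi> n)))
      \<longlonglongrightarrow> (\<Sum>b\<in>Basis. L2sq ?\<Omega> (g1 b))"
    by (intro tendsto_sum inner_L2_tendsto s st c1)
  moreover have "(\<lambda>n. - (\<Sum>b\<in>Basis. inner_L2 lborel (?r (\<phi> n)) (?r (dd b (dd b (\<phi> n))))))
      \<longlonglongrightarrow> - (\<Sum>b\<in>Basis. inner_L2 lborel (?r \<psi>) (?r (g2 b b)))"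
    by (intro tendsto_minus tendsto_sum inner_L2_tendsto s st c0 c2)
  moreover have "(\<Sum>b\<in>Basis. L2sq ?\<Omega> (dd b (\<phi> n)))
      = - (\<Sum>b\<in>Basis. inner_L2 lborel (?r (\<phi> n)) (?r (dd b (dd b (\<phi> n)))))" for n
    using L2sq_dd_test_fun[OF t _ _ R] L by (simp add: sum_negf[symmetric])
  ultimately show ?thesis using LIMSEQ_unique by simp
qed

lemma L2sq_hessian_in_H:
  assumes R: "R > 0" and L: "L > 0" and H: "in_H R L \<psi> g1 g2"
  shows "(\<Sum>b\<in>Basis. \<Sum>b'\<in>Basis. L2sq (dom_X R L) (g2 b b'))
    = (\<Sum>b\<in>Basis. \<Sum>b'\<in>Basis.
        inner_L2 lborel (zero_ext (dom_X R L) (g2 b b)) (zero_ext (dom_X R L) (g2 b' b')))"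
proof -
  let ?\<Omega> = "dom_X R L" and ?r = "zero_ext (dom_X R L)"
  obtain \<phi> where t: "\<And>n. test_fun R L (\<phi> n)"
    and c2: "\<And>b b'. b \<in> Basis \<Longrightarrow> b' \<in> Basis \<Longrightarrow>
      (\<lambda>n. norm_L2 lborel (\<lambda>p. ?r (dd b (dd b' (\<phi> n))) p - ?r (g2 b b') p)) \<longlonglongrightarrow> 0"
    by (rule in_H_approximation[OF H]) fast
  note s = in_H_sqint(3)[OF H, unfolded square_integrable_zero_ext_iff[symmetric]]
  note st = square_integrable_zero_ext_test_fun[OF test_fun_dd[OF test_fun_dd[OF t]]]
  have "(\<lambda>n. \<Sum>b\<in>Basis. \<Sum>b'\<in>Basis. L2sq ?\<Omega> (dd b (dd b' (\<phi> n))))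
      \<longlonglongrightarrow> (\<Sum>b\<in>Basis. \<Sum>b'\<in>Basis. L2sq ?\<Omega> (g2 b b'))"
    by (intro tendsto_sum inner_L2_tendsto s st c2)
  moreover have "(\<lambda>n. \<Sum>b\<in>Basis. \<Sum>b'\<in>Basis.
        inner_L2 lborel (?r (dd b (dd b (\<phi> n)))) (?r (dd b' (dd b' (\<phi> n)))))
      \<longlonglongrightarrow> (\<Sum>b\<in>Basis. \<Sum>b'\<in>Basis. inner_L2 lborel (?r (g2 b b)) (?r (g2 b' b')))"
    by (intro tendsto_sum inner_L2_tendsto s st c2)
  moreover have "(\<Sum>b\<in>Basis. \<Sum>b'\<in>Basis. L2sq ?\<Omega> (dd b (dd b' (\<phi> n))))
      = (\<Sum>b\<in>Basis. \<Sum>b'\<in>Basis.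
          inner_L2 lborel (?r (dd b (dd b (\<phi> n)))) (?r (dd b' (dd b' (\<phi> n)))))" for n
    using L2sq_dd_dd_test_fun[OF t _ _ _ R] L by (intro sum.cong refl) auto
  ultimately show ?thesis using LIMSEQ_unique by simp
qed

lemma poincare_in_H:
  assumes L: "L > 0" and H: "in_H R L \<psi> g1 g2"
  shows "L2sq (dom_X R L) \<psi>
    \<le> 8 * L\<^sup>2 * L2sq (dom_X R L) (g1 ((0,0),1))"
proof -
  let ?\<Omega> = "dom_X R L" and ?r = "zero_ext (dom_X R L)" and ?e = "((0,0),1) :: pt"
  have e: "?e \<in> Basis" by (simp add: Basis_pt)
  obtain \<phi> where t: "\<And>n. test_fun R L (\<phi> n)"
    and c0: "(\<lambda>n. norm_L2 lborel (\<lambda>p. ?r (\<phi> n) p - ?r \<psi> p)) \<longlonglongrightarrow> 0"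
    and c1: "(\<lambda>n. norm_L2 lborel (\<lambda>p. ?r (dd ?e (\<phi> n)) p - ?r (g1 ?e) p)) \<longlonglongrightarrow> 0"
    by (rule in_H_approximation[OF H]) (use e in fast)
  have mean: "AE x in lborel. x \<in> ball 0 R \<longrightarrow> (LBINT z=0..L. \<psi> (x, z)) = 0"
    using H unfolding in_H_def by blast
  note s = in_H_sqint(1,2)[OF H, unfolded square_integrable_zero_ext_iff[symmetric]]
  note st = square_integrable_zero_ext_test_fun[OF t]
    square_integrable_zero_ext_test_fun[OF test_fun_dd[OF t e]]
  have "(\<lambda>n. L2sq ?\<Omega> (\<phi> n)) \<longlonglongrightarrow> L2sq ?\<Omega> \<psi>"
    by (intro inner_L2_tendsto s st c0)
  moreover have "(\<lambda>n. 2 * inner_L2 lborel (\<lambda>p. ?r (\<phi> n) p - ?r \<psi> p) (\<lambda>p. ?r (\<phi> n) p - ?r \<psi> p)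
        + 8 * L\<^sup>2 * L2sq ?\<Omega> (dd ?e (\<phi> n)))
      \<longlonglongrightarrow> 2 * 0 + 8 * L\<^sup>2 * L2sq ?\<Omega> (g1 ?e)"
    using tendsto_power[OF c0, of 2]
    by (intro tendsto_intros inner_L2_tendsto s e st c1) (simp add: norm_L2_squared)
  moreover have "L2sq ?\<Omega> (\<phi> n)
      \<le> 2 * inner_L2 lborel (\<lambda>p. ?r (\<phi> n) p - ?r \<psi> p) (\<lambda>p. ?r (\<phi> n) p - ?r \<psi> p)
        + 8 * L\<^sup>2 * L2sq ?\<Omega> (dd ?e (\<phi> n))" for n
    using poincare_test_fun_mean_zero[OF t in_H_sqint(1)[OF H] L mean] by (simp add: zero_ext_diff)
  ultimately show ?thesis using LIMSEQ_le by fastforce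
qed

text \<open>Here \<open>a\<close>, \<open>d\<close>, \<open>N\<close> are the \<open>L\<^sup>2\<close> norms of \<open>\<psi>\<close>, \<open>\<Delta>\<psi>\<close>, \<open>\<L>\<psi>\<close> and \<open>G = \<parallel>\<nabla>\<psi>\<parallel>\<^sup>2\<close>.
  The Poincare inequality \<open>a\<^sup>2 \<le> 8 L\<^sup>2 G\<close> and \<open>G \<le> a d\<close> give \<open>a \<le> 8 L\<^sup>2 d\<close>; for small \<open>L\<close> the
  potential term \<open>Mb a\<close> can then be absorbed into \<open>d\<close>.\<close>

lemma elliptic_estimate_arith:
  fixes a d G N Mb L :: real
  assumes "0 \<le> a" "0 \<le> d" "0 \<le> Mb" "0 < L" "L \<le> 1/4" "8 * L\<^sup>2 * Mb \<le> 1/2"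
    and poincare: "a\<^sup>2 \<le> 8 * L\<^sup>2 * G" and G: "G \<le> a * d" and d: "d \<le> N + Mb * a"
  shows "a \<le> 16 * L\<^sup>2 * N" and "a + sqrt G + d \<le> 9 * N"
proof -
  have "a * a \<le> a * (8 * L\<^sup>2 * d)"
    using poincare mult_left_mono[OF G, of "8 * L\<^sup>2"] by (simp add: power2_eq_square algebra_simps)
  then have ad: "a \<le> 8 * L\<^sup>2 * d"
    using \<open>0 \<le> a\<close> \<open>0 \<le> d\<close> by (cases "a = 0") auto
  have "Mb * a \<le> (8 * L\<^sup>2 * Mb) * d"
    using mult_left_mono[OF ad \<open>0 \<le> Mb\<close>] by (simp add: algebra_simps)
  also have "\<dots> \<le> d / 2" using mult_right_mono[OF \<open>8 * L\<^sup>2 * Mb \<le> 1/2\<close> \<open>0 \<le> d\<close>] by simp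
  finally have d2: "d \<le> 2 * N" using d by linarith
  then have N: "0 \<le> N" using \<open>0 \<le> d\<close> by linarith
  have "8 * L\<^sup>2 * d \<le> 8 * L\<^sup>2 * (2 * N)"
    using d2 by (intro mult_left_mono) auto
  with ad show a: "a \<le> 16 * L\<^sup>2 * N" by linarith
  have "G \<le> (16 * L\<^sup>2 * N) * (2 * N)"
    using G mult_mono[OF a d2] \<open>0 \<le> a\<close> \<open>0 \<le> d\<close> N by simp
  also have "\<dots> \<le> (6 * L * N)\<^sup>2" using \<open>0 < L\<close> by (simp add: power2_eq_square)
  finally have "sqrt G \<le> 6 * L * N"
    using \<open>0 < L\<close> N by (simp add: real_sqrt_le_iff real_le_lsqrt)
  moreover have "16 * L\<^sup>2 \<le> 1" and "6 * L \<le> 2"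
    using \<open>L \<le> 1/4\<close> \<open>0 < L\<close> power_mono[of L "1/4" 2] by (auto simp: power2_eq_square)
  ultimately show "a + sqrt G + d \<le> 9 * N"
    using a d2 N mult_right_mono[of "16 * L\<^sup>2" 1 N] mult_right_mono[of "6 * L" 2 N] by linarith
qed

lemma estimate_in_H:
  fixes V :: "real \<Rightarrow> real" and \<phi>bar :: "real \<times> real \<Rightarrow> real"
  assumes R: "R > 0" and L: "L > 0" "L \<le> 1/4" and Mb: "Mb \<ge> 0" "8 * L\<^sup>2 * Mb \<le> 1/2"
    and Wb: "\<forall>x\<in>ball 0 R. \<bar>deriv (deriv V) (\<phi>bar x)\<bar> \<le> Mb"
    and Wm: "(\<lambda>q. indicator (dom_X R L) q * deriv (deriv V) (\<phi>bar (fst q))) \<in> borel_measurable lborel"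
    and H: "in_H R L \<psi> g1 g2"
  shows "norm_L2 lborel (zero_ext (dom_X R L) \<psi>) \<le> 16 * L\<^sup>2 * L2norm (dom_X R L) (Lop V \<phi>bar \<psi> g2)"
    and "sob2_norm (dom_X R L) \<psi> g1 g2 \<le> 9 * L2norm (dom_X R L) (Lop V \<phi>bar \<psi> g2)"
proof -
  let ?\<Omega> = "dom_X R L"
  let ?r = "zero_ext ?\<Omega>"
  let ?e = "((0,0),1) :: pt"
  note s = in_H_sqint[OF H, unfolded square_integrable_zero_ext_iff[symmetric]]
  define \<Delta> where "\<Delta> p = (\<Sum>b\<in>Basis. ?r (g2 b b) p)" for p
  have s\<Delta>: "square_integrable lborel \<Delta>"
    unfolding \<Delta>_def[abs_def] by (rule square_integrable_sum) (use s in auto)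
  define W where "W q = indicator ?\<Omega> q * deriv (deriv V) (\<phi>bar (fst q))" for q
  have Wm': "W \<in> borel_measurable lborel" using Wm unfolding W_def[abs_def] .
  have Wbound: "\<bar>W q\<bar> \<le> Mb" for q
    using Wb Mb by (auto simp: W_def dom_X_def indicator_def mem_Times_iff)
  have sW: "square_integrable lborel (\<lambda>p. W p * ?r \<psi> p)"
    by (rule square_integrable_bounded_mult[OF s(1) Wm' Wbound])
  define a where "a = norm_L2 lborel (?r \<psi>)"
  define d where "d = norm_L2 lborel \<Delta>"
  define N where "N = L2norm ?\<Omega> (Lop V \<phi>bar \<psi> g2)"
  define G where "G = (\<Sum>b\<in>Basis. L2sq ?\<Omega> (g1 b))"
  have a0: "a \<ge> 0" and d0: "d \<ge> 0" unfolding a_def d_def by (simp_all add: norm_L2_nonneg)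
  have "?r (Lop V \<phi>bar \<psi> g2) = (\<lambda>p. \<Delta> p - W p * ?r \<psi> p)"
    by (rule ext) (simp add: zero_ext_def Lop_def \<Delta>_def W_def indicator_def sum_distrib_left)
  then have N: "N = norm_L2 lborel (\<lambda>p. \<Delta> p - W p * ?r \<psi> p)"
    unfolding N_def L2norm_eq_norm_L2 by simp
  have "norm_L2 lborel (\<lambda>p. W p * ?r \<psi> p) \<le> Mb * a"
    unfolding a_def by (rule norm_L2_bounded_mult_le[OF s(1) Wm' Wbound Mb(1)])
  then have dN: "d \<le> N + Mb * a"
    using norm_L2_le_diff_add[OF s\<Delta> sW] unfolding d_def N by simp
  have "G = - inner_L2 lborel (?r \<psi>) \<Delta>"
    unfolding G_def L2sq_grad_in_H[OF R L(1) H] \<Delta>_def[abs_def]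
    by (subst inner_L2_sum_right) (use s in auto)
  then have Gad: "G \<le> a * d"
    using abs_inner_L2_le[OF s(1) s\<Delta>] unfolding a_def d_def by simp
  have "a\<^sup>2 \<le> 8 * L\<^sup>2 * L2sq ?\<Omega> (g1 ?e)"
    unfolding a_def norm_L2_squared by (rule poincare_in_H[OF L(1) H])
  also have "\<dots> \<le> 8 * L\<^sup>2 * G"
    unfolding G_def by (intro mult_left_mono member_le_sum) (auto simp: Basis_pt inner_L2_self_nonneg)
  finally have aG: "a\<^sup>2 \<le> 8 * L\<^sup>2 * G" .
  have \<Delta>_eq: "\<Delta> = (\<lambda>p. \<Sum>b\<in>Basis. ?r (g2 b b) p)" by (simp add: \<Delta>_def[abs_def])
  have "(\<Sum>b\<in>Basis. \<Sum>b'\<in>Basis. L2sq ?\<Omega> (g2 b b'))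
      = (\<Sum>b\<in>Basis. inner_L2 lborel (?r (g2 b b)) \<Delta>)"
    unfolding L2sq_hessian_in_H[OF R L(1) H] \<Delta>_eq
    by (intro sum.cong refl, subst inner_L2_sum_right) (use s in auto)
  also have "\<dots> = inner_L2 lborel \<Delta> \<Delta>"
    using inner_L2_sum_left[OF s\<Delta>, of Basis "\<lambda>b. ?r (g2 b b)"] s by (simp add: \<Delta>_eq[symmetric])
  finally have "sob2_norm ?\<Omega> \<psi> g1 g2 = a + sqrt G + d"
    using sob2_norm_eq_norm_L2[OF in_H_sqint[OF H]] d0
    unfolding a_def G_def d_def by (simp add: norm_L2_def)
  with elliptic_estimate_arith[OF a0 d0 Mb(1) L Mb(2) aG Gad dN]
  show "norm_L2 lborel (?r \<psi>) \<le> 16 * L\<^sup>2 * L2norm ?\<Omega> (Lop V \<phi>bar \<psi> g2)"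
    and "sob2_norm ?\<Omega> \<psi> g1 g2 \<le> 9 * L2norm ?\<Omega> (Lop V \<phi>bar \<psi> g2)"
    unfolding a_def N_def by simp_all
qed

lemma AE_zero_if_norm_L2_zero_ext_eq_0:
  assumes "sqint \<Omega> f" "norm_L2 lborel (zero_ext \<Omega> f) = 0"
  shows "AE p in lborel. p \<in> \<Omega> \<longrightarrow> f p = 0"
proof -
  have "(\<integral>p. zero_ext \<Omega> f p * zero_ext \<Omega> f p \<partial>lborel) = 0"
    using assms(2) norm_L2_squared[of lborel "zero_ext \<Omega> f"] by (simp add: inner_L2_def)
  moreover have s: "square_integrable lborel (zero_ext \<Omega> f)"
    using assms(1) by (simp add: square_integrable_zero_ext_iff)
  ultimately have "AE p in lborel. zero_ext \<Omega> f p * zero_ext \<Omega> f p = 0"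
    using integral_nonneg_eq_0_iff_AE[OF square_integrable_mult[OF s s]] by simp
  then show ?thesis by (rule AE_mp) (auto simp: zero_ext_def)
qed

lemma AE_zero_if_norm_L2_le_L2norm:
  assumes "sqint \<Omega> \<psi>" and le: "norm_L2 lborel (zero_ext \<Omega> \<psi>) \<le> C * L2norm \<Omega> F"
    and F: "AE p in lborel. p \<in> \<Omega> \<longrightarrow> F p = 0"
  shows "AE p in lborel. p \<in> \<Omega> \<longrightarrow> \<psi> p = 0"
proof (rule AE_zero_if_norm_L2_zero_ext_eq_0[OF assms(1)])
  have "L2norm \<Omega> F = 0"
    using F unfolding L2norm_def set_lebesgue_integral_def
    by (subst integral_eq_zero_AE) (auto elim!: AE_mp)
  with le norm_L2_nonneg show "norm_L2 lborel (zero_ext \<Omega> \<psi>) = 0"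
    by (metis mult_zero_right order_antisym)
qed

lemma small_L_bounds:
  fixes Mb L :: real
  assumes "Mb \<ge> 0" "0 < L" "L < 1 / (4 * (Mb + 1))"
  shows "L \<le> 1/4" and "8 * L\<^sup>2 * Mb \<le> 1/2"
proof -
  have x: "4 * (Mb + 1) * L < 1" using assms by (simp add: pos_less_divide_eq mult.commute)
  moreover have "L * 4 \<le> 4 * (Mb + 1) * L" using assms by (simp add: algebra_simps)
  ultimately show "L \<le> 1/4" by simp
  have "(4 * (Mb + 1) * L)\<^sup>2 \<le> 1" using x assms by (intro power_le_one) auto
  moreover have "Mb \<le> (Mb + 1)\<^sup>2" using assms by (simp add: power2_eq_square algebra_simps)
  then have "Mb * L\<^sup>2 \<le> (Mb + 1)\<^sup>2 * L\<^sup>2" by (rule mult_right_mono) simp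
  moreover have "(4 * (Mb + 1) * L)\<^sup>2 = 16 * ((Mb + 1)\<^sup>2 * L\<^sup>2)"
    by (simp add: power2_eq_square algebra_simps)
  ultimately show "8 * L\<^sup>2 * Mb \<le> 1/2" by (simp add: algebra_simps)
qed

lemma estimate_for_small_L:
  fixes V :: "real \<Rightarrow> real" and \<phi>bar :: "real \<times> real \<Rightarrow> real"
  assumes R: "R > 0" and V: "smooth_on UNIV V" and \<phi>bar: "smooth_on (ball 0 R) \<phi>bar"
    and Mb: "Mb \<ge> 0" "\<forall>x\<in>ball 0 R. \<bar>deriv (deriv V) (\<phi>bar x)\<bar> \<le> Mb"
    and L: "0 < L" "L < 1 / (4 * (Mb + 1))" and H: "in_H R L \<psi> g1 g2"
  shows "norm_L2 lborel (zero_ext (dom_X R L) \<psi>) \<le> 16 * L\<^sup>2 * L2norm (dom_X R L) (Lop V \<phi>bar \<psi> g2)"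
    and "sob2_norm (dom_X R L) \<psi> g1 g2 \<le> 9 * L2norm (dom_X R L) (Lop V \<phi>bar \<psi> g2)"
  using estimate_in_H[OF R L(1) small_L_bounds(1)[OF Mb(1) L] Mb(1) small_L_bounds(2)[OF Mb(1) L] Mb(2)
      borel_measurable_potential[OF continuous_on_deriv_deriv[OF V] smooth_on_imp_continuous_on[OF \<phi>bar]]
      H]
  by simp_all

theorem proposition3p3:
  fixes R cV :: real and V :: "real \<Rightarrow> real" and \<phi>bar :: "real \<times> real \<Rightarrow> real"
  assumes "R > 0"
    and "cV > 0"
    and "smooth_on UNIV V"
    and "\<forall>t. t * deriv V t \<ge> - cV\<^sup>2"
    and "\<forall>t. deriv (deriv V) t \<ge> - cV\<^sup>2"
    and "smooth_on (ball 0 R) \<phi>bar"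
    and "bounded (\<phi>bar ` ball 0 R)"
  shows "\<exists>L0>0. \<exists>c>0. \<forall>L. 0 < L \<and> L < L0 \<longrightarrow>
           (\<forall>\<psi> g1 g2. in_H R L \<psi> g1 g2 \<longrightarrow>
              (AE p in lborel. p \<in> dom_X R L \<longrightarrow> Lop V \<phi>bar \<psi> g2 p = 0)
              \<longrightarrow> (AE p in lborel. p \<in> dom_X R L \<longrightarrow> \<psi> p = 0))
         \<and> (\<forall>\<psi> g1 g2. in_H R L \<psi> g1 g2 \<longrightarrow>
              sob2_norm (dom_X R L) \<psi> g1 g2 \<le> c * L2norm (dom_X R L) (Lop V \<phi>bar \<psi> g2))"
proof -
  obtain Mb where "Mb \<ge> 0" "\<And>x. x \<in> ball 0 R \<Longrightarrow> \<bar>deriv (deriv V) (\<phi>bar x)\<bar> \<le> Mb"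
    by (rule bounded_continuous_comp[OF continuous_on_deriv_deriv[OF assms(3)] assms(7)]) blast
  then have Mb: "Mb \<ge> 0" "\<forall>x\<in>ball 0 R. \<bar>deriv (deriv V) (\<phi>bar x)\<bar> \<le> Mb" by auto
  note estimate = estimate_for_small_L[OF assms(1,3,6) Mb]
  show ?thesis
  proof (rule exI[of _ "1 / (4 * (Mb + 1))"], intro exI[of _ "9::real"] conjI allI impI)
    show "1 / (4 * (Mb + 1)) > 0" using Mb(1) by simp
  next
    fix L \<psi> g1 g2
    assume "0 < L \<and> L < 1 / (4 * (Mb + 1))" and H: "in_H R L \<psi> g1 g2"
      and "AE p in lborel. p \<in> dom_X R L \<longrightarrow> Lop V \<phi>bar \<psi> g2 p = 0"
    with estimate(1) show "AE p in lborel. p \<in> dom_X R L \<longrightarrow> \<psi> p = 0"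
      by (intro AE_zero_if_norm_L2_le_L2norm[OF in_H_sqint(1)[OF H]]) auto
  next
    fix L \<psi> g1 g2
    assume "0 < L \<and> L < 1 / (4 * (Mb + 1))" and "in_H R L \<psi> g1 g2"
    with estimate(2) show "sob2_norm (dom_X R L) \<psi> g1 g2 \<le> 9 * L2norm (dom_X R L) (Lop V \<phi>bar \<psi> g2)"
      by auto
  qed simp
qed

end
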